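(* Let $c_0,z_0>0$ and let $R_{III,2}(z,\varepsilon)$ be defined as in the context. If \begin{equation*} \int_{-z_0}^{z_0}\|R_{III}(t(s,\varepsilon),\varepsilon)\|ds=o\left(\varepsilon^{\frac23}\right) \text{ as }\varepsilon\rightarrow0^+, \end{equation*} then the system \begin{equation*} u_{III,2}'(z) =\left( c_0 \left( \begin{array}{cc} 0 & 1 \\ z & 0 \\ \end{array} \right) + R_{III,2}(z,\varepsilon) \right) u_{III,2}(z) \end{equation*} has a matrix solution $U_{III,2}(z,\varepsilon)$ such that for every $z\in[-z_0,z_0]$ \begin{equation*} U_{III,2}(z,\varepsilon)\rightarrow \left( \begin{array}{cc} \mathrm{Ai}(c_0^{\frac23}z) & \mathrm{Bi}(c_0^{\frac23}z) \\ c_0^{-\frac13}\mathrm{Ai}\,'(c_0^{\frac23}z) & c_0^{-\frac13}\mathrm{Bi}\,'(c_0^{\frac23}z) \\ \end{array} \right) \text{ as }\varepsilon\rightarrow0^+. \end{equation*}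
   Context: Let $\beta>0$, $\gamma\in(\frac12,1)$, $t_0:=(2\beta)^{1/\gamma}$ (the turning point), and $c_0:=\frac{t_0}{4\gamma}$. Let $\varepsilon>0$ be a small parameter, and use the variable $z(t,\varepsilon):=\varepsilon^{-2/3}\left(1-\frac{t^{2\gamma}}{4\beta^2}\right)$, with inverse $t(z,\varepsilon)=t_0(1-\varepsilon^{2/3}z)^{1/(2\gamma)}$. Let $R_{III}(t,\varepsilon)$ be a $2\times2$ matrix-valued remainder (the perturbation in the system $\varepsilon u'(t)=\left(\begin{pmatrix}\beta/t^{\gamma} & -1/2\\ 1/2 & -\beta/t^{\gamma}\end{pmatrix}+R_{III}(t,\varepsilon)\right)u(t)$). Define $T_{III}(t):=\begin{pmatrix}1 & \frac{\beta}{t^{\gamma}}+\frac12\\ 1 & -\frac{\beta}{t^{\gamma}}-\frac12\end{pmatrix}$, $R_{III,1}(t,\varepsilon):=-\frac{\varepsilon\beta\gamma}{t^{1+\gamma}\left(\frac{\beta}{t^{\gamma}}+\frac12\right)}\begin{pmatrix}0&0\\0&1\end{pmatrix}+T_{III}^{-1}(t)R_{III}(t,\varepsilon)T_{III}(t)$, and \begin{multline*} R_{III,2}(z,\varepsilon):=c_0\left(\frac1{(1-\varepsilon^{\frac23}z)^{1-\frac1{2\gamma}}}\begin{pmatrix}0&1\\ \frac{z}{1-\varepsilon^{\frac23}z}&0\end{pmatrix}-\begin{pmatrix}0&1\\ z&0\end{pmatrix}\right)\\ -\frac{c_0}{\varepsilon^{\frac23}(1-\varepsilon^{\frac23}z)^{1-\frac1{2\gamma}}}\begin{pmatrix}\varepsilon^{\frac13}&0\\0&-2\end{pmatrix}R_{III,1}(t(z,\varepsilon),\varepsilon)\begin{pmatrix}2&0\\0&-\varepsilon^{\frac13}\end{pmatrix}.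 \end{multline*} $\mathrm{Ai}$, $\mathrm{Bi}$ denote the Airy functions. *)

theory Defs
  imports "HOL-Analysis.Analysis" "HOL-Library.Landau_Symbols"
begin

definition mat2 :: "real \<Rightarrow> real \<Rightarrow> real \<Rightarrow> real \<Rightarrow> real^2^2" where
  "mat2 a b c d = (\<chi> i j. if i = 1 then (if j = 1 then a else b) else (if j = 1 then c else d))"

definition t0 :: "real \<Rightarrow> real \<Rightarrow> real" where
  "t0 \<beta> \<gamma> = (2 * \<beta>) powr (1 / \<gamma>)"

definition c0 :: "real \<Rightarrow> real \<Rightarrow> real" where
  "c0 \<beta> \<gamma> = t0 \<beta> \<gamma> / (4 * \<gamma>)"

definition tz :: "real \<Rightarrow> real \<Rightarrow> real \<Rightarrow> real \<Rightarrow> real" where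
  "tz \<beta> \<gamma> z \<epsilon> = t0 \<beta> \<gamma> * (1 - \<epsilon> powr (2/3) * z) powr (1 / (2 * \<gamma>))"

definition T_III :: "real \<Rightarrow> real \<Rightarrow> real \<Rightarrow> real^2^2" where
  "T_III \<beta> \<gamma> t = mat2 1 (\<beta> / t powr \<gamma> + 1/2) 1 (- (\<beta> / t powr \<gamma>) - 1/2)"

definition R_III1 :: "real \<Rightarrow> real \<Rightarrow> (real \<Rightarrow> real \<Rightarrow> real^2^2) \<Rightarrow> real \<Rightarrow> real \<Rightarrow> real^2^2" where
  "R_III1 \<beta> \<gamma> R t \<epsilon> =
     (- (\<epsilon> * \<beta> * \<gamma>) / (t powr (1 + \<gamma>) * (\<beta> / t powr \<gamma> + 1/2))) *\<^sub>R mat2 0 0 0 1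
     + matrix_inv (T_III \<beta> \<gamma> t) ** R t \<epsilon> ** T_III \<beta> \<gamma> t"

definition R_III2 :: "real \<Rightarrow> real \<Rightarrow> (real \<Rightarrow> real \<Rightarrow> real^2^2) \<Rightarrow> real \<Rightarrow> real \<Rightarrow> real^2^2" where
  "R_III2 \<beta> \<gamma> R z \<epsilon> =
     c0 \<beta> \<gamma> *\<^sub>R
       ((1 / (1 - \<epsilon> powr (2/3) * z) powr (1 - 1 / (2 * \<gamma>))) *\<^sub>R
          mat2 0 1 (z / (1 - \<epsilon> powr (2/3) * z)) 0
        - mat2 0 1 z 0)
     - (c0 \<beta> \<gamma> / (\<epsilon> powr (2/3) * (1 - \<epsilon> powr (2/3) * z) powr (1 - 1 / (2 * \<gamma>)))) *\<^sub>R
       (mat2 (\<epsilon> powr (1/3)) 0 0 (-2) ** R_III1 \<beta> \<gamma> R (tz \<beta> \<gamma> z \<epsilon>) \<epsilon>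
          ** mat2 2 0 0 (- (\<epsilon> powr (1/3))))"

text \<open>Airy functions via their Maclaurin series (DLMF 9.4.1, 9.4.2).\<close>
definition airy_f :: "real \<Rightarrow> real" where
  "airy_f x = (\<Sum>k. 3 ^ k * pochhammer (1/3) k * x ^ (3 * k) / fact (3 * k))"

definition airy_g :: "real \<Rightarrow> real" where
  "airy_g x = (\<Sum>k. 3 ^ k * pochhammer (2/3) k * x ^ (3 * k + 1) / fact (3 * k + 1))"

definition Ai :: "real \<Rightarrow> real" where
  "Ai x = airy_f x / (3 powr (2/3) * Gamma (2/3)) - airy_g x / (3 powr (1/3) * Gamma (1/3))"

definition Bi :: "real \<Rightarrow> real" where
  "Bi x = sqrt 3 * (airy_f x / (3 powr (2/3) * Gamma (2/3)) + airy_g x / (3 powr (1/3) * Gamma (1/3)))"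

definition airy_limit :: "real \<Rightarrow> real \<Rightarrow> real^2^2" where
  "airy_limit c z = mat2 (Ai (c powr (2/3) * z)) (Bi (c powr (2/3) * z))
                         (c powr (-1/3) * deriv Ai (c powr (2/3) * z))
                         (c powr (-1/3) * deriv Bi (c powr (2/3) * z))"

end

theory Submission
  imports Defs
begin

text \<open>The Airy matrix \<open>airy_limit c\<close>, \<open>c = c0 \<beta> \<gamma>\<close>, solves the unperturbed system
  \<open>u' = c [[0,1],[z,0]] u\<close>, since \<open>Ai\<close> and \<open>Bi\<close> solve \<open>y'' = x y\<close> termwise as power series.
  On \<open>[-z0, z0]\<close> the perturbation \<open>R_III2\<close> is the error of the change of variables, which is
  uniformly small because \<open>1 - \<epsilon>^(2/3) z\<close> is uniformly close to 1, plus \<open>\<epsilon>^(-2/3)\<close> times a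
  bounded conjugate of \<open>R_III1 = O(\<epsilon>) + O(\<parallel>R_III\<parallel>)\<close>; by the hypothesis the \<open>L\<^sup>1\<close> norm of
  \<open>R_III2\<close> therefore tends to 0. A linear Volterra equation with continuous kernel perturbed by
  an \<open>L\<^sup>1\<close>-small kernel has a solution uniformly close to the unperturbed one.\<close>

lemma norm_matrix_mult_le:
  fixes A :: "real^'n^'m" and B :: "real^'k^'n"
  shows "norm (A ** B) \<le> norm A * norm B"
proof -
  have sq: "norm M ^ 2 = (\<Sum>i\<in>UNIV. \<Sum>j\<in>UNIV. (M $ i $ j)^2)" for M :: "real^'q^'p"
    by (simp add: norm_vec_def L2_set_def sum_nonneg)
  have sq_col: "(\<Sum>j\<in>UNIV. norm (column j B) ^ 2) = norm B ^ 2"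
    unfolding sq by (simp add: column_def norm_vec_def L2_set_def sum_nonneg) (rule sum.swap)
  have sq_row: "(\<Sum>i\<in>UNIV. norm (A $ i) ^ 2) = norm A ^ 2"
    by (simp add: norm_vec_def L2_set_def sum_nonneg)
  have entry: "\<bar>(A ** B) $ i $ j\<bar> \<le> norm (A $ i) * norm (column j B)" for i j
    using Cauchy_Schwarz_ineq2[of "A $ i" "column j B"]
    by (simp add: matrix_matrix_mult_def inner_vec_def column_def)
  have "norm (A ** B) ^ 2 \<le> (\<Sum>i\<in>UNIV. \<Sum>j\<in>UNIV. norm (A $ i) ^ 2 * norm (column j B) ^ 2)"
    unfolding sq[of "A ** B"]
    by (intro sum_mono) (metis entry abs_ge_zero power_mono power_mult_distrib power2_abs)
  also have "\<dots> = (\<Sum>i\<in>UNIV. norm (A $ i) ^ 2) * (\<Sum>j\<in>UNIV. norm (column j B) ^ 2)"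
    by (simp add: sum_product)
  also have "\<dots> = (norm A * norm B) ^ 2"
    by (simp only: sq_row sq_col power_mult_distrib)
  finally show ?thesis
    by (rule power2_le_imp_le) simp
qed

lemma matrix_add_rdistrib: "((A :: 'a::semiring_1^'n^'m) + B) ** C = A ** C + B ** C"
  by (simp add: vec_eq_iff matrix_matrix_mult_def sum.distrib distrib_right)

lemma matrix_diff_ldistrib: "(A :: 'a::ring_1^'n^'m) ** (B - C) = A ** B - A ** C"
  by (simp add: vec_eq_iff matrix_matrix_mult_def sum_subtractf right_diff_distrib)

lemma bilinear_matrix_matrix_mult: "bilinear ((**) :: real^'n^'m \<Rightarrow> real^'k^'n \<Rightarrow> real^'k^'m)"
  unfolding bilinear_def
  by (auto intro!: linearI simp: matrix_add_ldistrib matrix_add_rdistrib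
      scalar_matrix_assoc matrix_scalar_ac)

lemma absolutely_integrable_bounded_continuous_product:
  fixes f :: "real \<Rightarrow> 'a::euclidean_space" and g :: "real \<Rightarrow> 'b::euclidean_space"
    and h :: "'a \<Rightarrow> 'b \<Rightarrow> 'c::euclidean_space"
  assumes "bilinear h" "continuous_on {a..b} f" "g absolutely_integrable_on {a..b}"
  shows "(\<lambda>s. h (f s) (g s)) absolutely_integrable_on {a..b}"
proof (rule absolutely_integrable_bounded_measurable_product[OF assms(1) _ _ _ assms(3)])
  show "f \<in> borel_measurable (lebesgue_on {a..b})"
    using continuous_imp_measurable_on_sets_lebesgue[OF assms(2)] by simp
  show "bounded (f ` {a..b})"
    using compact_continuous_image[OF assms(2)] by (simp add: compact_imp_bounded)
qed simp

lemma absolutely_integrable_matrix_mult_continuous_left: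
  fixes A :: "real \<Rightarrow> real^'n^'m" and V :: "real \<Rightarrow> real^'k^'n"
  assumes "continuous_on {a..b} A" "V absolutely_integrable_on {a..b}"
  shows "(\<lambda>s. A s ** V s) absolutely_integrable_on {a..b}"
  using absolutely_integrable_bounded_continuous_product[OF bilinear_matrix_matrix_mult assms] .

lemma absolutely_integrable_matrix_mult_continuous_right:
  fixes A :: "real \<Rightarrow> real^'n^'m" and V :: "real \<Rightarrow> real^'k^'n"
  assumes "A absolutely_integrable_on {a..b}" "continuous_on {a..b} V"
  shows "(\<lambda>s. A s ** V s) absolutely_integrable_on {a..b}"
proof -
  have "bilinear (\<lambda>(y :: real^'k^'n) (x :: real^'n^'m). x ** y)"
    using bilinear_matrix_matrix_mult by (auto simp: bilinear_def)
  from absolutely_integrable_bounded_continuous_product[OF this assms(2,1)] show ?thesis .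
qed

lemma absolutely_integrable_scaleR_continuous:
  fixes f :: "real \<Rightarrow> real" and g :: "real \<Rightarrow> 'a::euclidean_space"
  assumes "continuous_on {a..b} f" "g absolutely_integrable_on {a..b}"
  shows "(\<lambda>s. f s *\<^sub>R g s) absolutely_integrable_on {a..b}"
  using absolutely_integrable_bounded_continuous_product[OF _ assms] bounded_bilinear_scaleR
  by (simp add: bilinear_conv_bounded_bilinear)

lemma integrable_on_subinterval_absolutely:
  fixes f :: "real \<Rightarrow> 'a::euclidean_space"
  assumes "f absolutely_integrable_on {a..b}" "x \<in> {a..b}"
  shows "f integrable_on {a..x}"
proof (rule integrable_on_subinterval)
  show "f integrable_on {a..b}" using assms(1) by (rule set_lebesgue_integral_eq_integral(1))
qed (use assms(2) in auto)

section \<open>Perturbation of linear Volterra equations\<close>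

lemma integrable_norm_mult_continuous:
  fixes K :: "real \<Rightarrow> 'a::euclidean_space"
  assumes "K absolutely_integrable_on {a..b}" "continuous_on {a..b} f" "x \<in> {a..b}"
  shows "(\<lambda>s. norm (K s) * f s) integrable_on {a..x}"
proof -
  have "(\<lambda>s. f s *\<^sub>R norm (K s)) absolutely_integrable_on {a..b}"
    using absolutely_integrable_scaleR_continuous[OF assms(2) absolutely_integrable_norm[OF assms(1)]]
    by (simp add: o_def)
  from integrable_on_subinterval_absolutely[OF this assms(3)] show ?thesis
    by (simp add: mult.commute)
qed

lemma integral_norm_subinterval_le:
  fixes f :: "real \<Rightarrow> 'a::euclidean_space"
  assumes "f absolutely_integrable_on {a..b}" "x \<in> {a..b}"
  shows "integral {a..x} (\<lambda>s. norm (f s)) \<le> integral {a..b} (\<lambda>s. norm (f s))"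
proof -
  have nf: "(\<lambda>s. norm (f s)) absolutely_integrable_on {a..b}"
    using absolutely_integrable_norm[OF assms(1)] by (simp add: o_def)
  show ?thesis
    using assms(2) integrable_on_subinterval_absolutely[OF nf assms(2)] nf
    by (intro integral_subset_le) (auto simp: set_lebesgue_integral_eq_integral(1))
qed

lemma norm_integral_matrix_mult_le:
  fixes B Y :: "real \<Rightarrow> real^'n^'n"
  assumes B: "B absolutely_integrable_on {a..b}" and Y: "continuous_on {a..b} Y"
    and N: "\<And>s. s \<in> {a..b} \<Longrightarrow> norm (Y s) \<le> N" and z: "z \<in> {a..b}"
  shows "norm (integral {a..z} (\<lambda>s. B s ** Y s)) \<le> integral {a..b} (\<lambda>s. norm (B s)) * N"
proof -
  have "norm (integral {a..z} (\<lambda>s. B s ** Y s)) \<le> integral {a..z} (\<lambda>s. norm (B s) * N)"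
  proof (rule integral_norm_bound_integral)
    show "(\<lambda>s. B s ** Y s) integrable_on {a..z}"
      using z B Y by (intro integrable_on_subinterval_absolutely[where b=b]
          absolutely_integrable_matrix_mult_continuous_right)
    show "(\<lambda>s. norm (B s) * N) integrable_on {a..z}"
      using integrable_norm_mult_continuous[OF B continuous_on_const z] .
    fix s assume "s \<in> {a..z}"
    then have "norm (Y s) \<le> N" using z N[of s] by simp
    then show "norm (B s ** Y s) \<le> norm (B s) * N"
      using norm_matrix_mult_le[of "B s" "Y s"] by (meson mult_left_mono norm_ge_zero order_trans)
  qed
  also have "\<dots> \<le> integral {a..b} (\<lambda>s. norm (B s)) * N"
    using integral_norm_subinterval_le[OF B z] N[OF z] by (simp add: mult_right_mono order_trans[OF norm_ge_zero])
  finally show ?thesis .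
qed

lemma integral_exp_le:
  fixes L a x :: real
  assumes "L > 0" "a \<le> x"
  shows "(\<lambda>s. exp (L * (s - a))) integrable_on {a..x}"
    and "integral {a..x} (\<lambda>s. exp (L * (s - a))) \<le> exp (L * (x - a)) / L"
proof -
  have "((\<lambda>s. exp (L * (s - a)) / L) has_vector_derivative exp (L * (s - a))) (at s within {a..x})" for s
    using assms(1)
    by (auto intro!: derivative_eq_intros simp: has_real_derivative_iff_has_vector_derivative[symmetric])
  then have "((\<lambda>s. exp (L * (s - a))) has_integral (exp (L * (x - a)) / L - exp (L * (a - a)) / L)) {a..x}"
    by (intro fundamental_theorem_of_calculus[OF assms(2)])
  then show "(\<lambda>s. exp (L * (s - a))) integrable_on {a..x}"
    and "integral {a..x} (\<lambda>s. exp (L * (s - a))) \<le> exp (L * (x - a)) / L"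
    using assms(1) by (auto simp: integral_unique)
qed

lemma banach_fix_dist_le:
  fixes f :: "'a::complete_space \<Rightarrow> 'a"
  assumes "0 \<le> c" "c < 1" "\<And>x y. dist (f x) (f y) \<le> c * dist x y"
  obtains x where "f x = x" "\<And>y. dist x y \<le> dist (f y) y / (1 - c)"
proof -
  obtain x where x: "f x = x" using banach_fix_type[of c f] assms by blast
  have "dist x y \<le> dist (f y) y / (1 - c)" for y
  proof -
    have "dist x y \<le> c * dist x y + dist (f y) y"
      using dist_triangle[of "f x" y "f y"] assms(3)[of x y] x by simp
    then show ?thesis using assms(2) by (simp add: field_simps)
  qed
  with x that show ?thesis by blast
qed

lemma bcontfun_clamp_exists:
  fixes f :: "real \<Rightarrow> 'a::metric_space"
  assumes "continuous_on {a..b} f"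
  obtains g :: "real \<Rightarrow>\<^sub>C 'a" where "\<And>x. g x = f (clamp a b x)"
  using continuous_on_cbox_bcontfunE[of a b f] assms by auto

text \<open>Bielecki's trick: with \<open>L = 4 M + 1\<close> the kernel \<open>A + B\<close> satisfies the weighted bound below,
  which makes the Volterra operator a contraction with constant \<open>1/2\<close> in the sup norm weighted by
  \<open>exp (- L (s - a))\<close>. Its fixed point then lies within \<open>2 \<rho>\<close> (weighted) of every function that
  solves the equation up to a defect \<open>\<rho>\<close>.\<close>

lemma bielecki_weight_bound:
  fixes A B :: "real \<Rightarrow> real^'n^'m"
  assumes A: "\<And>s. s \<in> {a..b} \<Longrightarrow> norm (A s) \<le> M" "A absolutely_integrable_on {a..b}"
    and B: "B absolutely_integrable_on {a..b}" "integral {a..b} (\<lambda>s. norm (B s)) \<le> 1/4"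
    and x: "x \<in> {a..b}"
  shows "integral {a..x} (\<lambda>s. norm (A s + B s) * exp ((4*M + 1) * (s - a)))
           \<le> exp ((4*M + 1) * (x - a)) / 2"
proof -
  define L where "L = 4*M + 1"
  define e where "e = (\<lambda>s. exp (L * (s - a)))"
  have e_cont: "continuous_on {a..b} e" unfolding e_def by (intro continuous_intros)
  have M: "M \<ge> 0" using A(1)[of a] x by (auto intro: order_trans[OF norm_ge_zero])
  have L: "L > 0" "M / L \<le> 1/4" using M by (auto simp: L_def field_simps)
  have ie: "e integrable_on {a..x}" "integral {a..x} e \<le> e x / L"
    using integral_exp_le[OF L(1), of a x] x unfolding e_def by auto
  have nB_ab: "(\<lambda>s. norm (B s)) absolutely_integrable_on {a..b}"
    using absolutely_integrable_norm[OF B(1)] by (simp add: o_def)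
  have nB: "(\<lambda>s. norm (B s)) integrable_on {a..x}"
    using integrable_on_subinterval_absolutely[OF nB_ab x] .
  have nB_le: "integral {a..x} (\<lambda>s. norm (B s)) \<le> 1/4"
    using integral_norm_subinterval_le[OF B(1) x] B(2) by linarith
  have "integral {a..x} (\<lambda>s. norm (A s + B s) * e s) \<le> integral {a..x} (\<lambda>s. M * e s + e x * norm (B s))"
  proof (rule integral_le)
    show "(\<lambda>s. norm (A s + B s) * e s) integrable_on {a..x}"
      using integrable_norm_mult_continuous[OF set_integral_add(1)[OF A(2) B(1)] _ x] e_cont by blast
    show "(\<lambda>s. M * e s + e x * norm (B s)) integrable_on {a..x}"
      using ie(1) nB by (intro integrable_add integrable_on_mult_right)
    fix s assume s: "s \<in> {a..x}"
    have "norm (A s + B s) * e s \<le> (M + norm (B s)) * e s"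
      using A(1)[of s] s x norm_triangle_ineq[of "A s" "B s"] by (intro mult_right_mono) (auto simp: e_def)
    also have "\<dots> \<le> M * e s + e x * norm (B s)"
      using s L(1) by (simp add: e_def distrib_right mult.commute mult_left_mono)
    finally show "norm (A s + B s) * e s \<le> M * e s + e x * norm (B s)" .
  qed
  also have "\<dots> = M * integral {a..x} e + e x * integral {a..x} (\<lambda>s. norm (B s))"
    using ie(1) nB by (simp add: integral_add integrable_on_mult_right integrable_on_mult_left)
  also have "\<dots> \<le> M * (e x / L) + e x * (1/4)"
    using ie(2) nB_le M by (intro add_mono mult_left_mono) (auto simp: e_def)
  also have "\<dots> \<le> e x / 2"
    using L by (simp add: e_def field_simps)
  finally show ?thesis unfolding e_def L_def .
qed

lemma norm_integral_weighted_le: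
  fixes K :: "real \<Rightarrow> real^'n^'m" and D :: "real \<Rightarrow> real^'k^'n"
  assumes K: "K absolutely_integrable_on {a..b}" and x: "x \<in> {a..b}"
    and weight: "integral {a..x} (\<lambda>s. norm (K s) * exp (L * (s - a))) \<le> exp (L * (x - a)) / 2"
    and D: "continuous_on {a..b} D" "\<And>s. norm (D s) \<le> d"
  shows "norm (integral {a..x} (\<lambda>s. K s ** (exp (L * (s - a)) *\<^sub>R D s))) \<le> exp (L * (x - a)) * d / 2"
proof -
  define e where "e = (\<lambda>s. exp (L * (s - a)))"
  have e: "continuous_on {a..b} e" unfolding e_def by (intro continuous_intros)
  have d: "d \<ge> 0" using D(2)[of a] norm_ge_zero order_trans by blast
  have "norm (integral {a..x} (\<lambda>s. K s ** (e s *\<^sub>R D s))) \<le> integral {a..x} (\<lambda>s. norm (K s) * e s * d)"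
  proof (rule integral_norm_bound_integral)
    show "(\<lambda>s. K s ** (e s *\<^sub>R D s)) integrable_on {a..x}"
      using K e D(1) x
      by (intro integrable_on_subinterval_absolutely[where b=b]
          absolutely_integrable_matrix_mult_continuous_right continuous_intros) auto
    show "(\<lambda>s. norm (K s) * e s * d) integrable_on {a..x}"
      using integrable_norm_mult_continuous[OF K e x] by (rule integrable_on_mult_left)
    fix s
    have "norm (K s ** (e s *\<^sub>R D s)) \<le> norm (K s) * (e s * norm (D s))"
      using norm_matrix_mult_le[of "K s" "e s *\<^sub>R D s"] by (simp add: e_def)
    also have "\<dots> \<le> norm (K s) * e s * d"
      using D(2)[of s] by (simp add: e_def mult.assoc mult_left_mono)
    finally show "norm (K s ** (e s *\<^sub>R D s)) \<le> norm (K s) * e s * d" .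
  qed
  also have "\<dots> = integral {a..x} (\<lambda>s. norm (K s) * e s) * d" by simp
  also have "\<dots> \<le> e x * d / 2"
    using mult_right_mono[OF weight d] by (simp add: e_def)
  finally show ?thesis by (simp add: e_def)
qed

text \<open>The Volterra operator conjugated by the weight \<open>exp (L * (x - a))\<close>.\<close>

definition volterra_weighted_map ::
    "real \<Rightarrow> real \<Rightarrow> (real \<Rightarrow> real^'n^'n) \<Rightarrow> real^'n^'n \<Rightarrow> (real \<Rightarrow> real^'n^'n) \<Rightarrow> real \<Rightarrow> real^'n^'n" where
  "volterra_weighted_map a L K C W x =
     inverse (exp (L * (x - a))) *\<^sub>R (C + integral {a..x} (\<lambda>s. K s ** (exp (L * (s - a)) *\<^sub>R W s)))"

lemma integrable_volterra_integrand:
  fixes K W :: "real \<Rightarrow> real^'n^'n"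
  assumes "K absolutely_integrable_on {a..b}" "continuous_on {a..b} W" "x \<in> {a..b}"
  shows "(\<lambda>s. K s ** (exp (L * (s - a)) *\<^sub>R W s)) integrable_on {a..x}"
  using assms by (intro integrable_on_subinterval_absolutely[where b=b]
      absolutely_integrable_matrix_mult_continuous_right continuous_intros) auto

lemma continuous_on_volterra_weighted_map:
  fixes K W :: "real \<Rightarrow> real^'n^'n"
  assumes "a \<le> b" "K absolutely_integrable_on {a..b}" "continuous_on {a..b} W"
  shows "continuous_on {a..b} (volterra_weighted_map a L K C W)"
proof -
  have "continuous_on {a..b} (\<lambda>x. integral {a..x} (\<lambda>s. K s ** (exp (L * (s - a)) *\<^sub>R W s)))"
    using assms integrable_volterra_integrand[OF assms(2,3), of b] by (intro indefinite_integral_continuous_1) auto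
  then show ?thesis
    unfolding volterra_weighted_map_def by (intro continuous_intros) auto
qed

lemma norm_volterra_weighted_map_diff_le:
  fixes K W1 W2 :: "real \<Rightarrow> real^'n^'n"
  assumes K: "K absolutely_integrable_on {a..b}" and x: "x \<in> {a..b}"
    and weight: "integral {a..x} (\<lambda>s. norm (K s) * exp (L * (s - a))) \<le> exp (L * (x - a)) / 2"
    and W: "continuous_on {a..b} W1" "continuous_on {a..b} W2" "\<And>s. norm (W1 s - W2 s) \<le> d"
  shows "norm (volterra_weighted_map a L K C W1 x - volterra_weighted_map a L K C W2 x) \<le> d / 2"
proof -
  have diff: "volterra_weighted_map a L K C W1 x - volterra_weighted_map a L K C W2 x
      = inverse (exp (L * (x - a))) *\<^sub>R integral {a..x} (\<lambda>s. K s ** (exp (L * (s - a)) *\<^sub>R (W1 s - W2 s)))"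
  proof -
    have "integral {a..x} (\<lambda>s. K s ** (exp (L * (s - a)) *\<^sub>R (W1 s - W2 s)))
        = integral {a..x} (\<lambda>s. K s ** (exp (L * (s - a)) *\<^sub>R W1 s))
          - integral {a..x} (\<lambda>s. K s ** (exp (L * (s - a)) *\<^sub>R W2 s))"
      using integrable_volterra_integrand[OF K W(1) x, where L=L]
        integrable_volterra_integrand[OF K W(2) x, where L=L]
      by (simp add: integral_diff[symmetric] matrix_diff_ldistrib scaleR_diff_right)
    then show ?thesis
      unfolding volterra_weighted_map_def by (simp only: scaleR_diff_right[symmetric] add_diff_cancel_left)
  qed
  have bound: "norm (integral {a..x} (\<lambda>s. K s ** (exp (L * (s - a)) *\<^sub>R (W1 s - W2 s))))
      \<le> exp (L * (x - a)) * d / 2"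
    using W by (intro norm_integral_weighted_le[OF K x weight] continuous_intros) auto
  have "norm (volterra_weighted_map a L K C W1 x - volterra_weighted_map a L K C W2 x)
      = inverse (exp (L * (x - a))) * norm (integral {a..x} (\<lambda>s. K s ** (exp (L * (s - a)) *\<^sub>R (W1 s - W2 s))))"
    unfolding diff by simp
  also have "\<dots> \<le> inverse (exp (L * (x - a))) * (exp (L * (x - a)) * d / 2)"
    using bound by (rule mult_left_mono) simp
  also have "\<dots> = d / 2" by simp
  finally show ?thesis .
qed

lemma volterra_fixed_point_near:
  fixes K V :: "real \<Rightarrow> real^'n^'n" and C :: "real^'n^'n"
  assumes ab: "a \<le> b" and L: "L \<ge> 0"
    and K: "K absolutely_integrable_on {a..b}"
    and weight: "\<And>x. x \<in> {a..b} \<Longrightarrow>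
      integral {a..x} (\<lambda>s. norm (K s) * exp (L * (s - a))) \<le> exp (L * (x - a)) / 2"
    and V: "continuous_on {a..b} V"
    and defect: "\<And>z. z \<in> {a..b} \<Longrightarrow> norm (V z - (C + integral {a..z} (\<lambda>s. K s ** V s))) \<le> \<rho>"
  obtains U where "continuous_on {a..b} U"
    "\<And>z. z \<in> {a..b} \<Longrightarrow> U z = C + integral {a..z} (\<lambda>s. K s ** U s)"
    "\<And>z. z \<in> {a..b} \<Longrightarrow> norm (U z - V z) \<le> 2 * exp (L * (b - a)) * \<rho>"
proof -
  define e where "e s = exp (L * (s - a))" for s
  define F where "F W = volterra_weighted_map a L K C (apply_bcontfun W)" for W :: "real \<Rightarrow>\<^sub>C (real^'n^'n)"
  have clamp: "clamp a b x \<in> {a..b}" for x using clamp_in_interval[of a b x] ab by simp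
  define \<Phi> where "\<Phi> W = (SOME g :: real \<Rightarrow>\<^sub>C (real^'n^'n). \<forall>x. g x = F W (clamp a b x))" for W
  have \<Phi>: "\<Phi> W x = F W (clamp a b x)" for W x
  proof -
    have "continuous_on {a..b} (F W)"
      unfolding F_def by (rule continuous_on_volterra_weighted_map[OF ab K]) simp
    then obtain g :: "real \<Rightarrow>\<^sub>C (real^'n^'n)" where "\<And>x. g x = F W (clamp a b x)"
      by (rule bcontfun_clamp_exists) blast
    then have "\<exists>g :: real \<Rightarrow>\<^sub>C (real^'n^'n). \<forall>x. g x = F W (clamp a b x)" by blast
    then have "\<forall>x. \<Phi> W x = F W (clamp a b x)" unfolding \<Phi>_def by (rule someI_ex)
    then show ?thesis by blast
  qed
  have contraction: "dist (\<Phi> W1) (\<Phi> W2) \<le> 1/2 * dist W1 W2" for W1 W2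
  proof (rule dist_bound)
    fix x
    have "norm (F W1 (clamp a b x) - F W2 (clamp a b x)) \<le> dist W1 W2 / 2"
      unfolding F_def using clamp weight
      by (intro norm_volterra_weighted_map_diff_le[OF K]) (auto simp flip: dist_norm intro: dist_bounded)
    then show "dist (\<Phi> W1 x) (\<Phi> W2 x) \<le> 1/2 * dist W1 W2" by (simp add: \<Phi> dist_norm)
  qed
  obtain WV :: "real \<Rightarrow>\<^sub>C (real^'n^'n)" where WV: "\<And>x. WV x = inverse (e (clamp a b x)) *\<^sub>R V (clamp a b x)"
    by (rule bcontfun_clamp_exists[of a b "\<lambda>x. inverse (e x) *\<^sub>R V x"])
      (use V in \<open>auto simp: e_def intro!: continuous_intros\<close>)
  have WV_eq: "e s *\<^sub>R WV s = V s" if "s \<in> {a..b}" for s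
    using that ab by (simp add: WV e_def clamp_cancel_cbox[of s a b, simplified])
  have near: "dist (\<Phi> WV) WV \<le> \<rho>"
  proof (rule dist_bound)
    fix x
    define c where "c = clamp a b x"
    have c: "c \<in> {a..b}" using clamp c_def by simp
    have "integral {a..c} (\<lambda>s. K s ** (e s *\<^sub>R WV s)) = integral {a..c} (\<lambda>s. K s ** V s)"
      using c by (intro integral_cong) (simp add: WV_eq)
    then have "\<Phi> WV x - WV x = - (inverse (e c) *\<^sub>R (V c - (C + integral {a..c} (\<lambda>s. K s ** V s))))"
      by (simp add: \<Phi> F_def volterra_weighted_map_def WV c_def[symmetric] e_def algebra_simps)
    then have "norm (\<Phi> WV x - WV x) \<le> inverse (e c) * \<rho>"
      using defect[OF c] by (simp add: e_def mult_left_mono)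
    also have "\<dots> \<le> \<rho>"
      using c L order_trans[OF norm_ge_zero defect[OF c]]
      by (intro mult_left_le_one_le) (auto simp: e_def exp_minus[symmetric])
    finally show "dist (\<Phi> WV x) (WV x) \<le> \<rho>" by (simp add: dist_norm)
  qed
  obtain W where W_fix: "\<Phi> W = W" and "\<And>y. dist W y \<le> dist (\<Phi> y) y / (1 - 1/2)"
    by (rule banach_fix_dist_le[of "1/2" \<Phi>]) (use contraction in auto)
  from this(2)[of WV] have W_near: "dist W WV \<le> 2 * \<rho>" using near by simp
  show ?thesis
  proof
    show "continuous_on {a..b} (\<lambda>s. e s *\<^sub>R W s)" unfolding e_def by (intro continuous_intros) simp
    fix z assume z: "z \<in> {a..b}"
    have "W z = F W z" using \<Phi>[of W z] W_fix z ab by (simp add: clamp_cancel_cbox[of z a b, simplified])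
    then show "e z *\<^sub>R W z = C + integral {a..z} (\<lambda>s. K s ** (e s *\<^sub>R W s))"
      by (simp add: F_def volterra_weighted_map_def e_def)
    have "norm (e z *\<^sub>R W z - V z) = e z * dist (W z) (WV z)"
      unfolding WV_eq[OF z, symmetric] by (simp add: e_def dist_norm scaleR_diff_right[symmetric])
    also have "\<dots> \<le> exp (L * (b - a)) * (2 * \<rho>)"
      using z L dist_bounded[of W z WV] W_near
      by (intro mult_mono) (auto simp: e_def mult_left_mono)
    finally show "norm (e z *\<^sub>R W z - V z) \<le> 2 * exp (L * (b - a)) * \<rho>" by simp
  qed
qed

lemma volterra_perturbation:
  fixes A Y :: "real \<Rightarrow> real^'n^'n"
  assumes ab: "a \<le> b" and A: "continuous_on {a..b} A" and Y: "continuous_on {a..b} Y"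
    and Y_eq: "\<And>z. z \<in> {a..b} \<Longrightarrow> Y z = Y a + integral {a..z} (\<lambda>s. A s ** Y s)"
  obtains K where "\<And>B. B absolutely_integrable_on {a..b} \<Longrightarrow> integral {a..b} (\<lambda>s. norm (B s)) \<le> 1/4 \<Longrightarrow>
    \<exists>U. (\<lambda>s. (A s + B s) ** U s) absolutely_integrable_on {a..b}
      \<and> (\<forall>z\<in>{a..b}. U z = U a + integral {a..z} (\<lambda>s. (A s + B s) ** U s))
      \<and> (\<forall>z\<in>{a..b}. norm (U z - Y z) \<le> K * integral {a..b} (\<lambda>s. norm (B s)))"
proof -
  obtain M where M: "\<And>s. s \<in> {a..b} \<Longrightarrow> norm (A s) \<le> M"
    using compact_imp_bounded[OF compact_continuous_image[OF A compact_Icc]] unfolding bounded_iff by (meson imageI)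
  obtain N where N: "\<And>s. s \<in> {a..b} \<Longrightarrow> norm (Y s) \<le> N"
    using compact_imp_bounded[OF compact_continuous_image[OF Y compact_Icc]] unfolding bounded_iff by (meson imageI)
  have M_nonneg: "M \<ge> 0" using M[of a] ab by (auto intro: order_trans[OF norm_ge_zero])
  have A_ai: "A absolutely_integrable_on {a..b}" using A by (rule absolutely_integrable_continuous_real)
  show ?thesis
  proof (rule that[of "2 * exp ((4*M + 1) * (b - a)) * N"])
    fix B :: "real \<Rightarrow> real^'n^'n"
    assume B: "B absolutely_integrable_on {a..b}" and B_small: "integral {a..b} (\<lambda>s. norm (B s)) \<le> 1/4"
    define \<delta> where "\<delta> = integral {a..b} (\<lambda>s. norm (B s))"
    have AB: "(\<lambda>s. A s + B s) absolutely_integrable_on {a..b}" using A_ai B by (rule set_integral_add(1))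
    have defect: "norm (Y z - (Y a + integral {a..z} (\<lambda>s. (A s + B s) ** Y s))) \<le> \<delta> * N"
      if z: "z \<in> {a..b}" for z
    proof -
      have "(\<lambda>s. A s ** Y s) integrable_on {a..z}" "(\<lambda>s. B s ** Y s) integrable_on {a..z}"
        using z A_ai B Y by (intro integrable_on_subinterval_absolutely[where b=b]
            absolutely_integrable_matrix_mult_continuous_right; simp)+
      then have "Y z - (Y a + integral {a..z} (\<lambda>s. (A s + B s) ** Y s)) = - integral {a..z} (\<lambda>s. B s ** Y s)"
        using Y_eq[OF z] by (simp add: matrix_add_rdistrib integral_add)
      then show ?thesis
        using norm_integral_matrix_mult_le[OF B Y N z] by (simp add: \<delta>_def)
    qed
    obtain U where U: "continuous_on {a..b} U"
        "\<And>z. z \<in> {a..b} \<Longrightarrow> U z = Y a + integral {a..z} (\<lambda>s. (A s + B s) ** U s)"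
        "\<And>z. z \<in> {a..b} \<Longrightarrow> norm (U z - Y z) \<le> 2 * exp ((4*M + 1) * (b - a)) * (\<delta> * N)"
    proof (rule volterra_fixed_point_near[OF ab _ AB _ Y defect])
      show "0 \<le> 4*M + 1" using M_nonneg by simp
      show "integral {a..x} (\<lambda>s. norm (A s + B s) * exp ((4*M + 1) * (s - a)))
          \<le> exp ((4*M + 1) * (x - a)) / 2" if "x \<in> {a..b}" for x
        using bielecki_weight_bound[where M=M, OF M A_ai B B_small that] by blast
    qed blast+
    show "\<exists>U. (\<lambda>s. (A s + B s) ** U s) absolutely_integrable_on {a..b}
      \<and> (\<forall>z\<in>{a..b}. U z = U a + integral {a..z} (\<lambda>s. (A s + B s) ** U s))
      \<and> (\<forall>z\<in>{a..b}. norm (U z - Y z) \<le> 2 * exp ((4*M + 1) * (b - a)) * N * \<delta>)"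
    proof (intro exI[of _ U] conjI ballI)
      show "(\<lambda>s. (A s + B s) ** U s) absolutely_integrable_on {a..b}"
        using AB U(1) by (rule absolutely_integrable_matrix_mult_continuous_right)
      fix z assume z: "z \<in> {a..b}"
      show "U z = U a + integral {a..z} (\<lambda>s. (A s + B s) ** U s)"
        using U(2)[OF z] U(2)[of a] ab by simp
      show "norm (U z - Y z) \<le> 2 * exp ((4*M + 1) * (b - a)) * N * \<delta>"
        using U(3)[OF z] by (simp add: mult_ac)
    qed
  qed
qed

lemma volterra_perturbation_tendsto:
  fixes A Y :: "real \<Rightarrow> real^'n^'n" and B :: "'a \<Rightarrow> real \<Rightarrow> real^'n^'n"
  assumes ab: "a \<le> b" and A: "continuous_on {a..b} A" and Y: "continuous_on {a..b} Y"
    and Y_eq: "\<And>z. z \<in> {a..b} \<Longrightarrow> Y z = Y a + integral {a..z} (\<lambda>s. A s ** Y s)"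
    and B: "\<forall>\<^sub>F \<epsilon> in F. B \<epsilon> absolutely_integrable_on {a..b}"
    and B_small: "((\<lambda>\<epsilon>. integral {a..b} (\<lambda>s. norm (B \<epsilon> s))) \<longlongrightarrow> 0) F"
  shows "\<exists>U. (\<forall>\<^sub>F \<epsilon> in F. (\<lambda>s. (A s + B \<epsilon> s) ** U s \<epsilon>) absolutely_integrable_on {a..b}
             \<and> (\<forall>z\<in>{a..b}. U z \<epsilon> = U a \<epsilon> + integral {a..z} (\<lambda>s. (A s + B \<epsilon> s) ** U s \<epsilon>)))
           \<and> (\<forall>z\<in>{a..b}. ((\<lambda>\<epsilon>. U z \<epsilon>) \<longlongrightarrow> Y z) F)"
proof -
  obtain K where K: "\<And>B. B absolutely_integrable_on {a..b} \<Longrightarrow> integral {a..b} (\<lambda>s. norm (B s)) \<le> 1/4 \<Longrightarrow>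
    \<exists>U. (\<lambda>s. (A s + B s) ** U s) absolutely_integrable_on {a..b}
      \<and> (\<forall>z\<in>{a..b}. U z = U a + integral {a..z} (\<lambda>s. (A s + B s) ** U s))
      \<and> (\<forall>z\<in>{a..b}. norm (U z - Y z) \<le> K * integral {a..b} (\<lambda>s. norm (B s)))"
    using volterra_perturbation[OF ab A Y Y_eq] by blast
  define \<delta> where "\<delta> \<epsilon> = integral {a..b} (\<lambda>s. norm (B \<epsilon> s))" for \<epsilon>
  define good where "good \<epsilon> V \<longleftrightarrow> (\<lambda>s. (A s + B \<epsilon> s) ** V s) absolutely_integrable_on {a..b}
      \<and> (\<forall>z\<in>{a..b}. V z = V a + integral {a..z} (\<lambda>s. (A s + B \<epsilon> s) ** V s))
      \<and> (\<forall>z\<in>{a..b}. norm (V z - Y z) \<le> K * \<delta> \<epsilon>)" for \<epsilon> V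
  have small: "\<forall>\<^sub>F \<epsilon> in F. \<delta> \<epsilon> < 1/4"
    using B_small unfolding \<delta>_def by (rule order_tendstoD(2)) simp
  have ex_good: "\<forall>\<^sub>F \<epsilon> in F. \<exists>V. good \<epsilon> V"
    using B small by eventually_elim (use K in \<open>auto simp: good_def \<delta>_def\<close>)
  define W where "W \<epsilon> = (SOME V. good \<epsilon> V)" for \<epsilon>
  have good_W: "\<forall>\<^sub>F \<epsilon> in F. good \<epsilon> (W \<epsilon>)"
    using ex_good unfolding W_def by eventually_elim (erule someI_ex)
  show ?thesis
  proof (intro exI[of _ "\<lambda>z \<epsilon>. W \<epsilon> z"] conjI ballI)
    show "\<forall>\<^sub>F \<epsilon> in F. (\<lambda>s. (A s + B \<epsilon> s) ** W \<epsilon> s) absolutely_integrable_on {a..b}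
      \<and> (\<forall>z\<in>{a..b}. W \<epsilon> z = W \<epsilon> a + integral {a..z} (\<lambda>s. (A s + B \<epsilon> s) ** W \<epsilon> s))"
      using good_W unfolding good_def by eventually_elim blast
    fix z assume z: "z \<in> {a..b}"
    have "((\<lambda>\<epsilon>. W \<epsilon> z - Y z) \<longlongrightarrow> 0) F"
    proof (rule Lim_null_comparison)
      show "\<forall>\<^sub>F \<epsilon> in F. norm (W \<epsilon> z - Y z) \<le> K * \<delta> \<epsilon>"
        using good_W unfolding good_def by eventually_elim (use z in blast)
      show "((\<lambda>\<epsilon>. K * \<delta> \<epsilon>) \<longlongrightarrow> 0) F"
        using tendsto_mult_right_zero[OF B_small, of K] by (simp add: \<delta>_def)
    qed
    then show "((\<lambda>\<epsilon>. W \<epsilon> z) \<longlongrightarrow> Y z) F" by (rule LIM_zero_cancel)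
  qed
qed

section \<open>The Airy equation\<close>

definition airy_coeff :: "nat \<Rightarrow> nat \<Rightarrow> real" where
  "airy_coeff r k = 3 ^ k * pochhammer ((real r + 1) / 3) k / fact (3 * k + r)"

lemma airy_coeff_Suc:
  "airy_coeff r (Suc k) * ((3 * real k + real r + 2) * (3 * real k + real r + 3)) = airy_coeff r k"
proof -
  have fact: "(fact (3 * Suc k + r) :: real)
      = fact (3 * k + r) * ((3 * real k + real r + 1) * (3 * real k + real r + 2) * (3 * real k + real r + 3))"
    by (simp add: numeral_3_eq_3 fact_Suc algebra_simps)
  have poch: "pochhammer ((real r + 1) / 3) (Suc k) = pochhammer ((real r + 1) / 3) k * ((3 * real k + real r + 1) / 3)"
    by (simp add: pochhammer_Suc field_simps)
  have cancel: "(3 * X) * (P * (q1 / 3)) / (F * (q1 * q2 * q3)) * (q2 * q3) = X * P / F"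
    if "q1 \<noteq> 0" "q2 \<noteq> 0" "q3 \<noteq> 0" "F \<noteq> 0" for X P F q1 q2 q3 :: real
    using that by (simp add: field_simps)
  show ?thesis
    unfolding airy_coeff_def fact poch power_Suc by (rule cancel) auto
qed

lemma airy_coeff_bounds: "0 \<le> airy_coeff r k \<and> airy_coeff r k \<le> 1 / fact k"
proof (induction k)
  case 0
  then show ?case by (simp add: airy_coeff_def divide_le_eq_1)
next
  case (Suc k)
  define q :: real where "q = (3 * real k + real r + 2) * (3 * real k + real r + 3)"
  have q: "real (Suc k) \<le> q"
    unfolding q_def by (rule order_trans[of _ "3 * real k + real r + 2"]) (auto intro: mult_le_cancel_left1[THEN iffD2])
  have eq: "airy_coeff r (Suc k) = airy_coeff r k / q"
    using airy_coeff_Suc[of r k, folded q_def] q by (simp add: eq_divide_eq)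
  have "airy_coeff r k / q \<le> (1 / fact k) / real (Suc k)"
    using Suc q by (intro frac_le) auto
  then show ?case using Suc q by (simp add: eq fact_Suc field_simps)
qed

lemma summable_airy_series: "summable (\<lambda>k. airy_coeff r k * x ^ (3 * k + r))"
proof (rule summable_comparison_test)
  show "summable (\<lambda>k. \<bar>x\<bar> ^ r * ((\<bar>x\<bar> ^ 3) ^ k / fact k))"
    using summable_exp[of "\<bar>x\<bar> ^ 3"] by (intro summable_mult) (simp add: divide_inverse mult.commute)
  show "\<exists>N. \<forall>k\<ge>N. norm (airy_coeff r k * x ^ (3 * k + r)) \<le> \<bar>x\<bar> ^ r * ((\<bar>x\<bar> ^ 3) ^ k / fact k)"
  proof (intro exI allI impI)
    fix k :: nat
    have "(\<bar>x\<bar> ^ k) ^ 3 = (\<bar>x\<bar> ^ 3) ^ k" by (metis power_mult mult.commute)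
    then have "norm (airy_coeff r k * x ^ (3 * k + r)) = airy_coeff r k * (\<bar>x\<bar> ^ r * (\<bar>x\<bar> ^ 3) ^ k)"
      using airy_coeff_bounds[of r k] by (simp add: abs_mult power_abs power_add power_mult mult.commute)
    also have "\<dots> \<le> (1 / fact k) * (\<bar>x\<bar> ^ r * (\<bar>x\<bar> ^ 3) ^ k)"
      using airy_coeff_bounds[of r k] by (intro mult_right_mono) auto
    finally show "norm (airy_coeff r k * x ^ (3 * k + r)) \<le> \<bar>x\<bar> ^ r * ((\<bar>x\<bar> ^ 3) ^ k / fact k)"
      by simp
  qed
qed

definition lacunary_coeffs :: "(nat \<Rightarrow> real) \<Rightarrow> nat \<Rightarrow> nat \<Rightarrow> real" where
  "lacunary_coeffs a r n = (if n mod 3 = r then a (n div 3) else 0)"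

lemma sums_lacunary_coeffs:
  assumes "r < 3" "(\<lambda>k. a k * y ^ (3 * k + r)) sums s"
  shows "(\<lambda>n. lacunary_coeffs a r n * y ^ n) sums s"
proof -
  have mono: "strict_mono (\<lambda>k::nat. 3 * k + r)" by (auto simp: strict_mono_def)
  have "lacunary_coeffs a r n * y ^ n = 0" if "n \<notin> range (\<lambda>k. 3 * k + r)" for n
  proof -
    have "n \<noteq> 3 * (n div 3) + r" using that by blast
    then have "n mod 3 \<noteq> r" by (metis div_mult_mod_eq mult.commute)
    then show ?thesis by (simp add: lacunary_coeffs_def)
  qed
  moreover have "lacunary_coeffs a r (3 * k + r) = a k" for k
    using assms(1) by (simp add: lacunary_coeffs_def)
  ultimately show ?thesis
    using sums_mono_reindex[OF mono, of "\<lambda>n. lacunary_coeffs a r n * y ^ n" s] assms(2) by simp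
qed

lemma diffs_diffs_lacunary_airy_coeff:
  assumes "r < 2"
  shows "diffs (diffs (lacunary_coeffs (airy_coeff r) r)) n
           = (if n = 0 then 0 else lacunary_coeffs (airy_coeff r) r (n - 1))"
proof (cases "(n + 2) mod 3 = r")
  case True
  have n2: "n + 2 = 3 * ((n + 2) div 3) + r" using True by presburger
  then obtain k where k: "(n + 2) div 3 = Suc k" using assms not0_implies_Suc by fastforce
  with n2 have n: "n = 3 * k + r + 1" by simp
  have "diffs (diffs (lacunary_coeffs (airy_coeff r) r)) n
      = (real n + 1) * (real n + 2) * lacunary_coeffs (airy_coeff r) r (n + 2)"
    by (simp add: diffs_def algebra_simps)
  also have "\<dots> = airy_coeff r (Suc k) * ((3 * real k + real r + 2) * (3 * real k + real r + 3))"
    using True k by (simp add: lacunary_coeffs_def n algebra_simps)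
  also have "\<dots> = lacunary_coeffs (airy_coeff r) r (n - 1)"
    using assms by (simp add: airy_coeff_Suc n lacunary_coeffs_def)
  finally show ?thesis using n by simp
next
  case False
  have "(n - 1) mod 3 \<noteq> r" if "n \<noteq> 0"
  proof -
    have "n + 2 = (n - 1) + 3" using that by simp
    then show ?thesis using False by (metis mod_add_self2)
  qed
  then show ?thesis using False by (auto simp: diffs_def lacunary_coeffs_def)
qed

definition airy_solution :: "(real \<Rightarrow> real) \<Rightarrow> bool" where
  "airy_solution f \<longleftrightarrow>
     (\<forall>x. (f has_real_derivative deriv f x) (at x) \<and> (deriv f has_real_derivative x * f x) (at x))"

lemma airy_solution_power_series:
  fixes c :: "nat \<Rightarrow> real"
  assumes summable: "\<And>y. summable (\<lambda>n. c n * y ^ n)"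
    and diffs2: "\<And>n. diffs (diffs c) n = (if n = 0 then 0 else c (n - 1))"
  shows "airy_solution (\<lambda>x. \<Sum>n. c n * x ^ n)"
proof -
  have d1: "((\<lambda>x. \<Sum>n. c n * x ^ n) has_real_derivative (\<Sum>n. diffs c n * x ^ n)) (at x)" for x
    by (rule termdiffs_strong_converges_everywhere[OF summable])
  then have deriv: "deriv (\<lambda>x. \<Sum>n. c n * x ^ n) = (\<lambda>x. \<Sum>n. diffs c n * x ^ n)"
    by (intro ext DERIV_imp_deriv)
  have d2: "((\<lambda>x. \<Sum>n. diffs c n * x ^ n) has_real_derivative (\<Sum>n. diffs (diffs c) n * x ^ n)) (at x)" for x
    by (rule termdiffs_strong_converges_everywhere[OF termdiff_converges_all[OF summable]])
  have shift: "(\<Sum>n. diffs (diffs c) n * x ^ n) = x * (\<Sum>n. c n * x ^ n)" for x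
  proof -
    have "(\<lambda>n. diffs (diffs c) (Suc n) * x ^ Suc n) = (\<lambda>n. x * (c n * x ^ n))"
      by (simp add: diffs2 mult_ac)
    then have "(\<lambda>n. diffs (diffs c) (Suc n) * x ^ Suc n) sums (x * (\<Sum>n. c n * x ^ n))"
      using sums_mult[OF summable_sums[OF summable]] by simp
    then have "(\<lambda>n. diffs (diffs c) n * x ^ n) sums (x * (\<Sum>n. c n * x ^ n) + diffs (diffs c) 0 * x ^ 0)"
      by (rule sums_Suc_iff[THEN iffD1])
    then have "(\<lambda>n. diffs (diffs c) n * x ^ n) sums (x * (\<Sum>n. c n * x ^ n))"
      using diffs2[of 0] by simp
    then show ?thesis by (rule sums_unique[symmetric])
  qed
  show ?thesis unfolding airy_solution_def deriv using d1 d2 shift by simp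
qed

lemma airy_solution_airy_series:
  assumes "r < 2"
  shows "airy_solution (\<lambda>x. \<Sum>k. airy_coeff r k * x ^ (3 * k + r))"
proof -
  have sums: "(\<lambda>n. lacunary_coeffs (airy_coeff r) r n * x ^ n) sums (\<Sum>k. airy_coeff r k * x ^ (3 * k + r))" for x
    using assms by (intro sums_lacunary_coeffs summable_sums summable_airy_series) auto
  then have eq: "(\<lambda>x. \<Sum>k. airy_coeff r k * x ^ (3 * k + r)) = (\<lambda>x. \<Sum>n. lacunary_coeffs (airy_coeff r) r n * x ^ n)"
    by (auto simp: sums_iff)
  show ?thesis unfolding eq
    using sums assms by (intro airy_solution_power_series diffs_diffs_lacunary_airy_coeff) (auto dest: sums_summable)
qed

lemma airy_solution_lincomb:
  assumes "airy_solution f" "airy_solution g"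
  shows "airy_solution (\<lambda>x. p * f x + q * g x)"
proof -
  have f: "\<And>x. (f has_real_derivative deriv f x) (at x)" "\<And>x. (deriv f has_real_derivative x * f x) (at x)"
    and g: "\<And>x. (g has_real_derivative deriv g x) (at x)" "\<And>x. (deriv g has_real_derivative x * g x) (at x)"
    using assms unfolding airy_solution_def by auto
  have d1: "((\<lambda>x. p * f x + q * g x) has_real_derivative p * deriv f x + q * deriv g x) (at x)" for x
    by (intro DERIV_add DERIV_cmult f g)
  then have "deriv (\<lambda>x. p * f x + q * g x) = (\<lambda>x. p * deriv f x + q * deriv g x)"
    by (intro ext DERIV_imp_deriv)
  moreover have "((\<lambda>x. p * deriv f x + q * deriv g x) has_real_derivative x * (p * f x + q * g x)) (at x)" for x
  proof -
    have "((\<lambda>x. p * deriv f x + q * deriv g x) has_real_derivative p * (x * f x) + q * (x * g x)) (at x)"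
      by (intro DERIV_add DERIV_cmult f g)
    then show ?thesis by (simp add: algebra_simps)
  qed
  ultimately show ?thesis unfolding airy_solution_def using d1 by simp
qed

lemma airy_f_eq_airy_series: "airy_f = (\<lambda>x. \<Sum>k. airy_coeff 0 k * x ^ (3 * k + 0))"
  by (simp add: fun_eq_iff airy_f_def airy_coeff_def)

lemma airy_g_eq_airy_series: "airy_g = (\<lambda>x. \<Sum>k. airy_coeff 1 k * x ^ (3 * k + 1))"
  by (simp add: fun_eq_iff airy_g_def airy_coeff_def)

lemma airy_solution_Ai: "airy_solution Ai"
  and airy_solution_Bi: "airy_solution Bi"
proof -
  define p where "p = 1 / (3 powr (2/3) * Gamma (2/3::real))"
  define q where "q = 1 / (3 powr (1/3) * Gamma (1/3::real))"
  have f: "airy_solution airy_f"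
    unfolding airy_f_eq_airy_series by (rule airy_solution_airy_series) simp
  have g: "airy_solution airy_g"
    unfolding airy_g_eq_airy_series by (rule airy_solution_airy_series) simp
  have "Ai = (\<lambda>x. p * airy_f x + (- q) * airy_g x)" by (auto simp: fun_eq_iff Ai_def p_def q_def)
  then show "airy_solution Ai" using airy_solution_lincomb[OF f g, of p "- q"] by simp
  have "Bi = (\<lambda>x. (sqrt 3 * p) * airy_f x + (sqrt 3 * q) * airy_g x)"
    by (auto simp: fun_eq_iff Bi_def p_def q_def algebra_simps)
  then show "airy_solution Bi" using airy_solution_lincomb[OF f g, of "sqrt 3 * p" "sqrt 3 * q"] by simp
qed

section \<open>Two-by-two matrices and the Airy matrix\<close>

lemma matrix_inv_eqI:
  fixes A X :: "'a::semiring_1^'n^'n"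
  assumes "A ** X = mat 1" "X ** A = mat 1"
  shows "matrix_inv A = X"
  unfolding matrix_inv_def
proof (rule some_equality)
  show "A ** X = mat 1 \<and> X ** A = mat 1" using assms by simp
  fix Y assume Y: "A ** Y = mat 1 \<and> Y ** A = mat 1"
  have "Y = Y ** (A ** X)" using assms by simp
  also have "\<dots> = (Y ** A) ** X" by (rule matrix_mul_assoc)
  finally show "Y = X" using Y by simp
qed

lemma mat2_mult: "mat2 a b c d ** mat2 e f g h = mat2 (a*e + b*g) (a*f + b*h) (c*e + d*g) (c*f + d*h)"
  by (simp add: vec_eq_iff forall_2 mat2_def matrix_matrix_mult_def sum_2)

lemma mat2_scaleR: "r *\<^sub>R mat2 a b c d = mat2 (r*a) (r*b) (r*c) (r*d)"
  by (simp add: vec_eq_iff forall_2 mat2_def)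

lemma mat2_diff: "mat2 a b c d - mat2 e f g h = mat2 (a - e) (b - f) (c - g) (d - h)"
  by (simp add: vec_eq_iff forall_2 mat2_def)

lemma mat_1_eq_mat2: "(mat 1 :: real^2^2) = mat2 1 0 0 1"
  by (simp add: vec_eq_iff forall_2 mat2_def mat_def)

lemma mat2_decompose:
  "mat2 a b c d = a *\<^sub>R mat2 1 0 0 0 + b *\<^sub>R mat2 0 1 0 0 + c *\<^sub>R mat2 0 0 1 0 + d *\<^sub>R mat2 0 0 0 1"
  by (simp add: vec_eq_iff forall_2 mat2_def)

lemma norm_mat2: "norm (mat2 a b c d) = sqrt (a^2 + b^2 + c^2 + d^2)"
  by (simp add: mat2_def norm_vec_def L2_set_def UNIV_2 power2_abs add.assoc)

lemma norm_mat2_le: "norm (mat2 a b c d) \<le> \<bar>a\<bar> + \<bar>b\<bar> + \<bar>c\<bar> + \<bar>d\<bar>"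
proof -
  have "norm (mat2 a b c d) \<le> norm (a *\<^sub>R mat2 1 0 0 0) + norm (b *\<^sub>R mat2 0 1 0 0)
      + norm (c *\<^sub>R mat2 0 0 1 0) + norm (d *\<^sub>R mat2 0 0 0 1)"
    unfolding mat2_decompose[of a b c d] by (meson add_mono norm_triangle_ineq order_trans order_refl)
  then show ?thesis by (simp add: norm_mat2)
qed

lemma continuous_on_mat2 [continuous_intros]:
  "continuous_on S f1 \<Longrightarrow> continuous_on S f2 \<Longrightarrow> continuous_on S f3 \<Longrightarrow> continuous_on S f4 \<Longrightarrow>
   continuous_on S (\<lambda>s. mat2 (f1 s) (f2 s) (f3 s) (f4 s))"
  unfolding mat2_decompose[of "f1 _"] by (intro continuous_intros)

lemma mat2_has_vector_derivative:
  assumes "(f1 has_real_derivative d1) (at z)" "(f2 has_real_derivative d2) (at z)"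
    "(f3 has_real_derivative d3) (at z)" "(f4 has_real_derivative d4) (at z)"
  shows "((\<lambda>z. mat2 (f1 z) (f2 z) (f3 z) (f4 z)) has_vector_derivative mat2 d1 d2 d3 d4) (at z)"
proof -
  have scale: "((\<lambda>z. f z *\<^sub>R E) has_vector_derivative d *\<^sub>R E) (at z)"
    if "(f has_real_derivative d) (at z)" for f d and E :: "real^2^2"
    using that has_vector_derivative_scaleR[OF _ has_vector_derivative_const, of f d z UNIV E] by simp
  show ?thesis
    unfolding mat2_decompose[of "f1 _"] mat2_decompose[of d1]
    by (intro has_vector_derivative_add scale assms)
qed

lemma airy_limit_has_vector_derivative:
  assumes c: "c > 0"
  shows "(airy_limit c has_vector_derivative (c *\<^sub>R mat2 0 1 z 0) ** airy_limit c z) (at z)"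
proof -
  have Ai: "\<And>x. (Ai has_real_derivative deriv Ai x) (at x)" "\<And>x. (deriv Ai has_real_derivative x * Ai x) (at x)"
    and Bi: "\<And>x. (Bi has_real_derivative deriv Bi x) (at x)" "\<And>x. (deriv Bi has_real_derivative x * Bi x) (at x)"
    using airy_solution_Ai airy_solution_Bi unfolding airy_solution_def by auto
  define k where "k = c powr (2/3)"
  define m where "m = c powr (-1/3)"
  have km: "k = c * m" and mkk: "m * k * k = c"
    unfolding k_def m_def using c by (simp_all add: powr_add[symmetric] powr_mult_base)
  have lin: "((\<lambda>z. k * z) has_real_derivative k) (at z)" by (auto intro!: derivative_eq_intros)
  have "((\<lambda>z. mat2 (Ai (k*z)) (Bi (k*z)) (m * deriv Ai (k*z)) (m * deriv Bi (k*z))) has_vector_derivative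
        mat2 (deriv Ai (k*z) * k) (deriv Bi (k*z) * k) (m * ((k*z) * Ai (k*z) * k)) (m * ((k*z) * Bi (k*z) * k))) (at z)"
    by (intro mat2_has_vector_derivative DERIV_cmult DERIV_chain2[OF Ai(1) lin] DERIV_chain2[OF Bi(1) lin]
        DERIV_chain2[OF Ai(2) lin] DERIV_chain2[OF Bi(2) lin])
  moreover have "mat2 (deriv Ai (k*z) * k) (deriv Bi (k*z) * k) (m * ((k*z) * Ai (k*z) * k)) (m * ((k*z) * Bi (k*z) * k))
      = (c *\<^sub>R mat2 0 1 z 0) ** mat2 (Ai (k*z)) (Bi (k*z)) (m * deriv Ai (k*z)) (m * deriv Bi (k*z))"
  proof -
    have e: "m * ((k*z) * w * k) = c * z * w" for w
    proof -
      have "m * ((k*z) * w * k) = (m * k * k) * z * w" by (simp add: ac_simps)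
      then show ?thesis using mkk by simp
    qed
    show ?thesis unfolding mat2_scaleR mat2_mult e by (simp add: km ac_simps)
  qed
  ultimately show ?thesis
    unfolding airy_limit_def k_def m_def by simp
qed

lemma airy_limit_integral_equation:
  assumes "c > 0" "z \<in> {a..b}"
  shows "airy_limit c z = airy_limit c a + integral {a..z} (\<lambda>s. (c *\<^sub>R mat2 0 1 s 0) ** airy_limit c s)"
proof -
  have "((\<lambda>s. (c *\<^sub>R mat2 0 1 s 0) ** airy_limit c s) has_integral (airy_limit c z - airy_limit c a)) {a..z}"
    using assms airy_limit_has_vector_derivative
    by (intro fundamental_theorem_of_calculus) (auto intro: has_vector_derivative_at_within)
  then show ?thesis by (simp add: integral_unique)
qed

lemma continuous_on_airy_limit: "c > 0 \<Longrightarrow> continuous_on S (airy_limit c)"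
  by (meson airy_limit_has_vector_derivative continuous_at_imp_continuous_on has_vector_derivative_continuous)

section \<open>Estimates for the perturbation\<close>

lemma matrix_inv_T_III:
  assumes "\<beta> \<ge> 0"
  shows "matrix_inv (T_III \<beta> \<gamma> t)
    = mat2 (1/2) (1/2) (1 / (2 * (\<beta> / t powr \<gamma> + 1/2))) (-1 / (2 * (\<beta> / t powr \<gamma> + 1/2)))"
proof -
  define u where "u = \<beta> / t powr \<gamma> + 1/2"
  have u: "u > 0" unfolding u_def using assms by (simp add: add_nonneg_pos)
  have T: "T_III \<beta> \<gamma> t = mat2 1 u 1 (-u)" by (simp add: T_III_def u_def)
  show ?thesis
    unfolding T u_def[symmetric]
    by (rule matrix_inv_eqI) (use u in \<open>simp_all add: mat2_mult mat_1_eq_mat2 field_simps\<close>)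
qed

lemma norm_R_III1_le:
  assumes \<beta>: "\<beta> > 0" and \<gamma>: "\<gamma> > 0" and t: "0 < tm" "tm \<le> t" and \<epsilon>: "\<epsilon> \<ge> 0"
  shows "norm (R_III1 \<beta> \<gamma> R t \<epsilon>)
    \<le> \<epsilon> * (2 * \<beta> * \<gamma> / tm powr (1 + \<gamma>)) + 3 * (3 + 2 * \<beta> / tm powr \<gamma>) * norm (R t \<epsilon>)"
proof -
  define u where "u = \<beta> / t powr \<gamma> + 1/2"
  define \<sigma> where "\<sigma> = - (\<epsilon> * \<beta> * \<gamma>) / (t powr (1 + \<gamma>) * u)"
  have tpos: "t > 0" using t by linarith
  have u: "1/2 \<le> u" "u \<le> \<beta> / tm powr \<gamma> + 1/2"
    using \<beta> \<gamma> t tpos by (auto simp: u_def intro!: divide_left_mono powr_mono2)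
  have R1: "R_III1 \<beta> \<gamma> R t \<epsilon> = \<sigma> *\<^sub>R mat2 0 0 0 1 + matrix_inv (T_III \<beta> \<gamma> t) ** R t \<epsilon> ** T_III \<beta> \<gamma> t"
    by (simp add: R_III1_def \<sigma>_def u_def)
  have "\<bar>\<sigma>\<bar> = \<epsilon> * \<beta> * \<gamma> / (t powr (1 + \<gamma>) * u)"
    using \<epsilon> \<beta> \<gamma> u by (simp add: \<sigma>_def abs_divide abs_mult)
  also have "\<dots> \<le> \<epsilon> * \<beta> * \<gamma> / (tm powr (1 + \<gamma>) * (1/2))"
    using \<epsilon> \<beta> \<gamma> t u by (intro divide_left_mono mult_mono powr_mono2) auto
  finally have \<sigma>_le: "\<bar>\<sigma>\<bar> \<le> \<epsilon> * (2 * \<beta> * \<gamma> / tm powr (1 + \<gamma>))" by (simp add: mult_ac)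
  have "norm (matrix_inv (T_III \<beta> \<gamma> t)) \<le> 1/2 + 1/2 + 1 / (2 * u) + 1 / (2 * u)"
    using norm_mat2_le[of "1/2" "1/2" "1 / (2 * u)" "-1 / (2 * u)"] u
    by (simp add: matrix_inv_T_III \<beta>[THEN less_imp_le] u_def[symmetric])
  also have "\<dots> \<le> 3" using u by (simp add: field_simps)
  finally have Tinv: "norm (matrix_inv (T_III \<beta> \<gamma> t)) \<le> 3" .
  have "norm (T_III \<beta> \<gamma> t) \<le> 1 + u + 1 + u"
    using norm_mat2_le[of 1 u 1 "-u"] u by (simp add: T_III_def u_def)
  also have "\<dots> \<le> 3 + 2 * \<beta> / tm powr \<gamma>" using u by simp
  finally have T: "norm (T_III \<beta> \<gamma> t) \<le> 3 + 2 * \<beta> / tm powr \<gamma>" .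
  have "norm (matrix_inv (T_III \<beta> \<gamma> t) ** R t \<epsilon> ** T_III \<beta> \<gamma> t)
      \<le> norm (matrix_inv (T_III \<beta> \<gamma> t)) * norm (R t \<epsilon>) * norm (T_III \<beta> \<gamma> t)"
    by (meson norm_matrix_mult_le mult_right_mono norm_ge_zero order_trans)
  also have "\<dots> \<le> 3 * norm (R t \<epsilon>) * (3 + 2 * \<beta> / tm powr \<gamma>)"
    using Tinv T by (intro mult_mono) auto
  finally have "norm (matrix_inv (T_III \<beta> \<gamma> t) ** R t \<epsilon> ** T_III \<beta> \<gamma> t)
      \<le> 3 * (3 + 2 * \<beta> / tm powr \<gamma>) * norm (R t \<epsilon>)" by (simp only: mult_ac)
  moreover have "norm (\<sigma> *\<^sub>R mat2 0 0 0 (1::real)) \<le> \<epsilon> * (2 * \<beta> * \<gamma> / tm powr (1 + \<gamma>))"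
    using \<sigma>_le by (simp add: norm_mat2)
  ultimately show ?thesis
    unfolding R1 by (meson add_mono norm_triangle_ineq order_trans)
qed

lemma tz_lower_bound:
  assumes \<beta>: "\<beta> > 0" and \<gamma>: "\<gamma> > 0" and s: "\<epsilon> powr (2/3) * \<bar>s\<bar> \<le> 1/2"
  shows "t0 \<beta> \<gamma> * (1/2) powr (1 / (2 * \<gamma>)) \<le> tz \<beta> \<gamma> s \<epsilon>"
proof -
  have "\<epsilon> powr (2/3) * s \<le> \<epsilon> powr (2/3) * \<bar>s\<bar>" by (intro mult_left_mono) auto
  then have "\<epsilon> powr (2/3) * s \<le> 1/2" using s by linarith
  then have "(1/2) powr (1 / (2 * \<gamma>)) \<le> (1 - \<epsilon> powr (2/3) * s) powr (1 / (2 * \<gamma>))"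
    using \<gamma> by (intro powr_mono2) auto
  then show ?thesis
    unfolding tz_def using \<beta> by (simp add: t0_def)
qed

definition powr_oscillation :: "real \<Rightarrow> real \<Rightarrow> real" where
  "powr_oscillation a \<eta> = \<bar>(1 - \<eta>) powr a - 1\<bar> + \<bar>(1 + \<eta>) powr a - 1\<bar>"

lemma abs_powr_minus_one_le_oscillation:
  assumes "a \<le> 0" "0 < 1 - \<eta>" "1 - \<eta> \<le> q" "q \<le> 1 + \<eta>"
  shows "\<bar>q powr a - 1\<bar> \<le> powr_oscillation a \<eta>"
proof -
  have "q powr a \<le> (1 - \<eta>) powr a" "(1 + \<eta>) powr a \<le> q powr a"
    using assms by (auto intro: powr_mono2')
  then show ?thesis unfolding powr_oscillation_def by linarith
qed

lemma powr_oscillation_tendsto_0: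
  assumes "(h \<longlongrightarrow> 0) F"
  shows "((\<lambda>x. powr_oscillation a (h x)) \<longlongrightarrow> 0) F"
proof -
  have "((\<lambda>x. \<bar>(1 - h x) powr a - 1\<bar> + \<bar>(1 + h x) powr a - 1\<bar>)
      \<longlongrightarrow> \<bar>(1 - 0) powr a - 1\<bar> + \<bar>(1 + 0) powr a - 1\<bar>) F"
    by (intro tendsto_intros assms) auto
  then show ?thesis unfolding powr_oscillation_def by simp
qed

lemma norm_rescaled_airy_matrix_diff_le:
  assumes c: "c \<ge> 0" and p: "p \<ge> 0" and \<eta>: "\<eta> < 1" and q: "1 - \<eta> \<le> q" "q \<le> 1 + \<eta>" and s: "\<bar>s\<bar> \<le> z0"
  shows "norm (c *\<^sub>R ((1 / q powr p) *\<^sub>R mat2 0 1 (s / q) 0 - mat2 0 1 s 0))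
    \<le> c * (powr_oscillation (- p) \<eta> + z0 * powr_oscillation (- (p + 1)) \<eta>)"
proof -
  have qpos: "q > 0" using \<eta> q by linarith
  have "(1 / q powr p) *\<^sub>R mat2 0 1 (s / q) 0 - mat2 0 1 s 0
      = mat2 0 (q powr (- p) - 1) (s * (q powr (- (p + 1)) - 1)) 0"
  proof -
    have "q powr (- (p + 1)) = 1 / (q * q powr p)"
      using qpos unfolding powr_minus_divide by (simp add: powr_add mult.commute)
    then show ?thesis by (simp add: mat2_scaleR mat2_diff powr_minus_divide algebra_simps)
  qed
  then have "norm ((1 / q powr p) *\<^sub>R mat2 0 1 (s / q) 0 - mat2 0 1 s 0)
      \<le> \<bar>q powr (- p) - 1\<bar> + \<bar>s\<bar> * \<bar>q powr (- (p + 1)) - 1\<bar>"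
    using norm_mat2_le[of 0 "q powr (- p) - 1" "s * (q powr (- (p + 1)) - 1)" 0] by (simp add: abs_mult)
  also have "\<dots> \<le> powr_oscillation (- p) \<eta> + z0 * powr_oscillation (- (p + 1)) \<eta>"
    using p \<eta> q s
    by (intro add_mono mult_mono abs_powr_minus_one_le_oscillation) auto
  finally show ?thesis using c by (simp add: mult_left_mono)
qed

lemma norm_diag_conjugate_le:
  fixes M :: "real^2^2"
  assumes \<epsilon>: "0 \<le> \<epsilon>" "\<epsilon> \<le> 1" and q: "1/2 \<le> q" and p: "p \<ge> 0" and c: "c \<ge> 0" and e: "e > 0"
  shows "norm ((c / (e * q powr p)) *\<^sub>R (mat2 (\<epsilon> powr (1/3)) 0 0 (-2) ** M ** mat2 2 0 0 (- (\<epsilon> powr (1/3)))))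
    \<le> 9 * c * 2 powr p / e * norm M"
proof -
  define D1 where "D1 = mat2 (\<epsilon> powr (1/3)) 0 0 (-2)"
  define D2 where "D2 = mat2 2 0 0 (- (\<epsilon> powr (1/3)))"
  have "\<epsilon> powr (1/3) \<le> 1" using \<epsilon> by (intro powr_le1) auto
  then have D: "norm D1 \<le> 3" "norm D2 \<le> 3"
    using norm_mat2_le[of "\<epsilon> powr (1/3)" 0 0 "-2"] norm_mat2_le[of 2 0 0 "- (\<epsilon> powr (1/3))"] \<epsilon>
    by (auto simp: D1_def D2_def)
  have "norm (D1 ** M ** D2) \<le> norm D1 * norm M * norm D2"
    by (meson norm_matrix_mult_le mult_right_mono norm_ge_zero order_trans)
  also have "\<dots> \<le> 3 * norm M * 3" using D by (intro mult_mono) auto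
  finally have DMD: "norm (D1 ** M ** D2) \<le> 9 * norm M" by simp
  have "1 / 2 powr p \<le> q powr p"
    using powr_mono2[of p "1/2" q] p q by (simp add: powr_divide)
  then have "c / (e * q powr p) \<le> c / (e * (1 / 2 powr p))"
    using c e by (intro divide_left_mono mult_left_mono mult_pos_pos) auto
  then have k: "c / (e * q powr p) \<le> c * 2 powr p / e" by simp
  have "norm ((c / (e * q powr p)) *\<^sub>R (D1 ** M ** D2)) = c / (e * q powr p) * norm (D1 ** M ** D2)"
    using c e q by simp
  also have "\<dots> \<le> (c * 2 powr p / e) * (9 * norm M)"
    using k DMD c e by (intro mult_mono) auto
  also have "\<dots> = 9 * c * 2 powr p / e * norm M" by simp
  finally show ?thesis unfolding D1_def D2_def .
qed

lemma c0_pos: "\<beta> > 0 \<Longrightarrow> \<gamma> > 0 \<Longrightarrow> c0 \<beta> \<gamma> > 0"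
  by (simp add: c0_def t0_def)

lemma norm_R_III2_le:
  fixes \<beta> \<gamma> z0 :: real and R :: "real \<Rightarrow> real \<Rightarrow> real^2^2"
  assumes \<beta>: "\<beta> > 0" and \<gamma>: "1/2 < \<gamma>"
  obtains C1 C2 where "\<And>\<epsilon> s. 0 < \<epsilon> \<Longrightarrow> \<epsilon> \<le> 1 \<Longrightarrow> \<epsilon> powr (2/3) * z0 \<le> 1/2 \<Longrightarrow> s \<in> {-z0..z0} \<Longrightarrow>
    norm (R_III2 \<beta> \<gamma> R s \<epsilon>)
      \<le> c0 \<beta> \<gamma> * (powr_oscillation (- (1 - 1 / (2 * \<gamma>))) (\<epsilon> powr (2/3) * z0)
                 + z0 * powr_oscillation (- (1 - 1 / (2 * \<gamma>) + 1)) (\<epsilon> powr (2/3) * z0))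
        + C1 * \<epsilon> powr (1/3) + C2 * (norm (R (tz \<beta> \<gamma> s \<epsilon>) \<epsilon>) / \<epsilon> powr (2/3))"
proof -
  define c where "c = c0 \<beta> \<gamma>"
  define p where "p = 1 - 1 / (2 * \<gamma>)"
  define tm where "tm = t0 \<beta> \<gamma> * (1/2) powr (1 / (2 * \<gamma>))"
  define K where "K = 9 * c * 2 powr p"
  have c: "c > 0" unfolding c_def using \<beta> \<gamma> by (simp add: c0_pos)
  have p: "p \<ge> 0" unfolding p_def using \<gamma> by (simp add: field_simps)
  have tm: "tm > 0" unfolding tm_def t0_def using \<beta> by simp
  show ?thesis
  proof (rule that[of "K * (2 * \<beta> * \<gamma> / tm powr (1 + \<gamma>))" "K * (3 * (3 + 2 * \<beta> / tm powr \<gamma>))"])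
    fix \<epsilon> s :: real
    assume \<epsilon>: "0 < \<epsilon>" "\<epsilon> \<le> 1" and \<eta>: "\<epsilon> powr (2/3) * z0 \<le> 1/2" and s: "s \<in> {-z0..z0}"
    define e where "e = \<epsilon> powr (2/3)"
    define q where "q = 1 - e * s"
    define R1 where "R1 = R_III1 \<beta> \<gamma> R (tz \<beta> \<gamma> s \<epsilon>) \<epsilon>"
    define D1 where "D1 = mat2 (\<epsilon> powr (1/3)) 0 0 (-2)"
    define D2 where "D2 = mat2 2 0 0 (- (\<epsilon> powr (1/3)))"
    have e: "e > 0" unfolding e_def using \<epsilon> by simp
    have es: "e * \<bar>s\<bar> \<le> e * z0" using s e by (intro mult_left_mono) auto
    have q: "1 - e * z0 \<le> q" "q \<le> 1 + e * z0" "q \<ge> 1/2"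
      using es \<eta> abs_le_iff[of "e * s"] by (auto simp: q_def e_def abs_mult)
    have R2: "R_III2 \<beta> \<gamma> R s \<epsilon> = c *\<^sub>R ((1 / q powr p) *\<^sub>R mat2 0 1 (s / q) 0 - mat2 0 1 s 0)
        - (c / (e * q powr p)) *\<^sub>R (D1 ** R1 ** D2)"
      by (simp add: R_III2_def c_def e_def q_def p_def R1_def D1_def D2_def)
    have part1: "norm (c *\<^sub>R ((1 / q powr p) *\<^sub>R mat2 0 1 (s / q) 0 - mat2 0 1 s 0))
        \<le> c * (powr_oscillation (- p) (e * z0) + z0 * powr_oscillation (- (p + 1)) (e * z0))"
      using c p q s \<eta> by (intro norm_rescaled_airy_matrix_diff_le) (auto simp: e_def)
    have R1_le: "norm R1 \<le> \<epsilon> * (2 * \<beta> * \<gamma> / tm powr (1 + \<gamma>)) + 3 * (3 + 2 * \<beta> / tm powr \<gamma>) * norm (R (tz \<beta> \<gamma> s \<epsilon>) \<epsilon>)"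
    proof -
      have "tm \<le> tz \<beta> \<gamma> s \<epsilon>"
        unfolding tm_def using \<beta> \<gamma> es \<eta> by (intro tz_lower_bound) (auto simp: e_def)
      then show ?thesis unfolding R1_def using \<beta> \<gamma> tm \<epsilon> by (intro norm_R_III1_le) auto
    qed
    have "norm ((c / (e * q powr p)) *\<^sub>R (D1 ** R1 ** D2)) \<le> K / e * norm R1"
      unfolding D1_def D2_def K_def using \<epsilon> q p c e by (intro norm_diag_conjugate_le) auto
    also have "\<dots> \<le> K / e * (\<epsilon> * (2 * \<beta> * \<gamma> / tm powr (1 + \<gamma>)) + 3 * (3 + 2 * \<beta> / tm powr \<gamma>) * norm (R (tz \<beta> \<gamma> s \<epsilon>) \<epsilon>))"
      using R1_le by (rule mult_left_mono) (use c e in \<open>simp add: K_def\<close>)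
    also have "\<dots> = K * (2 * \<beta> * \<gamma> / tm powr (1 + \<gamma>)) * (\<epsilon> / e)
        + K * (3 * (3 + 2 * \<beta> / tm powr \<gamma>)) * (norm (R (tz \<beta> \<gamma> s \<epsilon>) \<epsilon>) / e)"
      using e tm by (simp add: field_simps)
    also have "\<epsilon> / e = \<epsilon> powr (1/3)"
    proof -
      have "\<epsilon> = \<epsilon> powr (1/3) * e" using \<epsilon> by (simp add: e_def flip: powr_add)
      then show ?thesis using e by (simp add: field_simps)
    qed
    finally have part2: "norm ((c / (e * q powr p)) *\<^sub>R (D1 ** R1 ** D2)) \<le> K * (2 * \<beta> * \<gamma> / tm powr (1 + \<gamma>)) * \<epsilon> powr (1/3)
        + K * (3 * (3 + 2 * \<beta> / tm powr \<gamma>)) * (norm (R (tz \<beta> \<gamma> s \<epsilon>) \<epsilon>) / e)" .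
    show "norm (R_III2 \<beta> \<gamma> R s \<epsilon>)
      \<le> c0 \<beta> \<gamma> * (powr_oscillation (- (1 - 1 / (2 * \<gamma>))) (\<epsilon> powr (2/3) * z0)
                 + z0 * powr_oscillation (- (1 - 1 / (2 * \<gamma>) + 1)) (\<epsilon> powr (2/3) * z0))
        + K * (2 * \<beta> * \<gamma> / tm powr (1 + \<gamma>)) * \<epsilon> powr (1/3)
        + K * (3 * (3 + 2 * \<beta> / tm powr \<gamma>)) * (norm (R (tz \<beta> \<gamma> s \<epsilon>) \<epsilon>) / \<epsilon> powr (2/3))"
      using part1 part2 norm_triangle_ineq4[of "c *\<^sub>R ((1 / q powr p) *\<^sub>R mat2 0 1 (s / q) 0 - mat2 0 1 s 0)"
          "(c / (e * q powr p)) *\<^sub>R (D1 ** R1 ** D2)"]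
      unfolding R2 c_def p_def e_def by linarith
  qed
qed

lemma R_III2_absolutely_integrable:
  fixes R :: "real \<Rightarrow> real \<Rightarrow> real^2^2"
  assumes \<beta>: "\<beta> > 0" and \<gamma>: "\<gamma> > 0" and \<epsilon>: "\<epsilon> > 0" and \<eta>: "\<epsilon> powr (2/3) * z0 < 1"
    and R: "(\<lambda>s. R (tz \<beta> \<gamma> s \<epsilon>) \<epsilon>) absolutely_integrable_on {-z0..z0}"
  shows "(\<lambda>s. R_III2 \<beta> \<gamma> R s \<epsilon>) absolutely_integrable_on {-z0..z0}"
proof -
  define I where "I = {-z0..z0}"
  define e where "e = \<epsilon> powr (2/3)"
  define c where "c = c0 \<beta> \<gamma>"
  define p where "p = 1 - 1 / (2 * \<gamma>)"
  define t where "t s = tz \<beta> \<gamma> s \<epsilon>" for s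
  define u where "u s = \<beta> / t s powr \<gamma> + 1/2" for s
  define D1 where "D1 = mat2 (\<epsilon> powr (1/3)) 0 0 (-2)"
  define D2 where "D2 = mat2 2 0 0 (- (\<epsilon> powr (1/3)))"
  define P where "P s = c *\<^sub>R ((1 / (1 - e * s) powr p) *\<^sub>R mat2 0 1 (s / (1 - e * s)) 0 - mat2 0 1 s 0)" for s
  define k where "k s = c / (e * (1 - e * s) powr p)" for s
  define \<sigma> where "\<sigma> s = - (\<epsilon> * \<beta> * \<gamma>) / (t s powr (1 + \<gamma>) * u s)" for s
  define Tinv where "Tinv s = mat2 (1/2) (1/2) (1 / (2 * u s)) (-1 / (2 * u s))" for s
  define T where "T s = mat2 1 (u s) 1 (- (u s))" for s
  have e: "e \<ge> 0" unfolding e_def by simp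
  have q: "1 - e * s > 0" if "s \<in> I" for s
  proof -
    have "e * s \<le> e * z0" using that e by (intro mult_left_mono) (auto simp: I_def)
    then show ?thesis using \<eta> by (simp add: e_def)
  qed
  have t: "t s > 0" if "s \<in> I" for s
    using q[OF that] \<beta> by (simp add: t_def tz_def t0_def e_def)
  have u: "u s \<noteq> 0" for s
  proof -
    have "0 \<le> \<beta> / t s powr \<gamma>" using \<beta> by simp
    then show ?thesis unfolding u_def by linarith
  qed
  have eq: "R_III2 \<beta> \<gamma> R s \<epsilon> = P s - k s *\<^sub>R (D1 ** (\<sigma> s *\<^sub>R mat2 0 0 0 1 + Tinv s ** R (t s) \<epsilon> ** T s) ** D2)" for s
    unfolding R_III2_def R_III1_def matrix_inv_T_III[OF less_imp_le[OF \<beta>]]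
    by (simp add: T_III_def e_def c_def p_def t_def u_def D1_def D2_def P_def k_def \<sigma>_def Tinv_def T_def)
  have t_cont: "continuous_on I t"
    unfolding t_def tz_def by (intro continuous_intros) (auto dest!: q simp: e_def)
  have u_cont: "continuous_on I u"
    unfolding u_def by (intro continuous_intros t_cont) (auto dest!: t)
  have P_cont: "continuous_on I P"
    unfolding P_def by (intro continuous_intros) (auto dest!: q)
  have k_cont: "continuous_on I k"
    unfolding k_def using \<epsilon> by (intro continuous_intros) (auto dest!: q simp: e_def)
  have \<sigma>_cont: "continuous_on I \<sigma>"
    unfolding \<sigma>_def using u by (intro continuous_intros t_cont u_cont) (auto dest!: t)
  have Tinv_cont: "continuous_on I Tinv"
    unfolding Tinv_def using u by (intro continuous_intros u_cont) auto
  have T_cont: "continuous_on I T"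
    unfolding T_def by (intro continuous_intros u_cont)
  have "(\<lambda>s. Tinv s ** R (t s) \<epsilon> ** T s) absolutely_integrable_on I"
    using R Tinv_cont T_cont unfolding I_def t_def
    by (intro absolutely_integrable_matrix_mult_continuous_right absolutely_integrable_matrix_mult_continuous_left)
  moreover have "(\<lambda>s. \<sigma> s *\<^sub>R mat2 0 0 0 1) absolutely_integrable_on I"
    unfolding I_def using \<sigma>_cont[unfolded I_def]
    by (intro absolutely_integrable_continuous_real continuous_intros)
  ultimately have "(\<lambda>s. \<sigma> s *\<^sub>R mat2 0 0 0 1 + Tinv s ** R (t s) \<epsilon> ** T s) absolutely_integrable_on I"
    by (rule set_integral_add(1)[rotated])
  then have "(\<lambda>s. k s *\<^sub>R (D1 ** (\<sigma> s *\<^sub>R mat2 0 0 0 1 + Tinv s ** R (t s) \<epsilon> ** T s) ** D2))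
      absolutely_integrable_on I"
    unfolding I_def using k_cont[unfolded I_def]
    by (intro absolutely_integrable_scaleR_continuous absolutely_integrable_matrix_mult_continuous_right
        absolutely_integrable_matrix_mult_continuous_left continuous_intros)
  moreover have "P absolutely_integrable_on I"
    unfolding I_def using P_cont[unfolded I_def] by (rule absolutely_integrable_continuous_real)
  ultimately show ?thesis
    unfolding eq I_def by (rule set_integral_diff(1)[rotated])
qed

lemma integral_norm_le_affine_bound:
  fixes f :: "real \<Rightarrow> 'a::euclidean_space" and g :: "real \<Rightarrow> 'b::euclidean_space"
  assumes f: "f absolutely_integrable_on {a..b}" and g: "g absolutely_integrable_on {a..b}" and "a \<le> b"
    and bound: "\<And>s. s \<in> {a..b} \<Longrightarrow> norm (f s) \<le> m + k * norm (g s)"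
  shows "integral {a..b} (\<lambda>s. norm (f s)) \<le> (b - a) * m + k * integral {a..b} (\<lambda>s. norm (g s))"
proof -
  have ng: "(\<lambda>s. norm (g s)) integrable_on {a..b}"
    using set_lebesgue_integral_eq_integral(1)[OF absolutely_integrable_norm[OF g]] by (simp add: o_def)
  have "integral {a..b} (\<lambda>s. norm (f s)) \<le> integral {a..b} (\<lambda>s. m + k * norm (g s))"
  proof (rule integral_le)
    show "(\<lambda>s. norm (f s)) integrable_on {a..b}"
      using set_lebesgue_integral_eq_integral(1)[OF absolutely_integrable_norm[OF f]] by (simp add: o_def)
    show "(\<lambda>s. m + k * norm (g s)) integrable_on {a..b}"
      by (intro integrable_add integrable_on_mult_right ng integrable_const_ivl)
  qed (rule bound)
  also have "\<dots> = integral {a..b} (\<lambda>s. m) + integral {a..b} (\<lambda>s. k * norm (g s))"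
    by (intro integral_add integrable_on_mult_right ng integrable_const_ivl)
  also have "\<dots> = (b - a) * m + k * integral {a..b} (\<lambda>s. norm (g s))"
    using \<open>a \<le> b\<close> by simp
  finally show ?thesis .
qed

lemma tendsto_powr_at_right_0: "a > 0 \<Longrightarrow> ((\<lambda>\<epsilon>::real. \<epsilon> powr a) \<longlongrightarrow> 0) (at_right 0)"
proof -
  assume "a > 0"
  moreover have "\<forall>\<^sub>F \<epsilon> in at_right 0. 0 \<le> (\<epsilon>::real)"
    using eventually_at_right_less[of 0] by eventually_elim simp
  ultimately show ?thesis
    using tendsto_powr'[of "\<lambda>\<epsilon>. \<epsilon>" 0 "at_right 0" "\<lambda>_. a" a] by simp
qed

lemma R_III2_L1_tendsto_0:
  fixes \<beta> \<gamma> z0 :: real and R :: "real \<Rightarrow> real \<Rightarrow> real^2^2"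
  assumes \<beta>: "\<beta> > 0" and \<gamma>: "1/2 < \<gamma>" and z0: "z0 > 0"
    and R_ai: "\<forall>\<^sub>F \<epsilon> in at_right 0. (\<lambda>s. R (tz \<beta> \<gamma> s \<epsilon>) \<epsilon>) absolutely_integrable_on {-z0..z0}"
    and R_small: "(\<lambda>\<epsilon>. integral {-z0..z0} (\<lambda>s. norm (R (tz \<beta> \<gamma> s \<epsilon>) \<epsilon>))) \<in> o[at_right 0](\<lambda>\<epsilon>. \<epsilon> powr (2/3))"
  shows "\<forall>\<^sub>F \<epsilon> in at_right 0. (\<lambda>s. R_III2 \<beta> \<gamma> R s \<epsilon>) absolutely_integrable_on {-z0..z0}"
    and "((\<lambda>\<epsilon>. integral {-z0..z0} (\<lambda>s. norm (R_III2 \<beta> \<gamma> R s \<epsilon>))) \<longlongrightarrow> 0) (at_right 0)"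
proof -
  obtain C1 C2 where bound: "\<And>\<epsilon> s. 0 < \<epsilon> \<Longrightarrow> \<epsilon> \<le> 1 \<Longrightarrow> \<epsilon> powr (2/3) * z0 \<le> 1/2 \<Longrightarrow> s \<in> {-z0..z0} \<Longrightarrow>
    norm (R_III2 \<beta> \<gamma> R s \<epsilon>)
      \<le> c0 \<beta> \<gamma> * (powr_oscillation (- (1 - 1 / (2 * \<gamma>))) (\<epsilon> powr (2/3) * z0)
                 + z0 * powr_oscillation (- (1 - 1 / (2 * \<gamma>) + 1)) (\<epsilon> powr (2/3) * z0))
        + C1 * \<epsilon> powr (1/3) + C2 * (norm (R (tz \<beta> \<gamma> s \<epsilon>) \<epsilon>) / \<epsilon> powr (2/3))"
    using norm_R_III2_le[OF \<beta> \<gamma>] by blast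
  define \<eta> where "\<eta> \<epsilon> = \<epsilon> powr (2/3) * z0" for \<epsilon> :: real
  define J where "J \<epsilon> = integral {-z0..z0} (\<lambda>s. norm (R (tz \<beta> \<gamma> s \<epsilon>) \<epsilon>))" for \<epsilon>
  define M where "M \<epsilon> = c0 \<beta> \<gamma> * (powr_oscillation (- (1 - 1 / (2 * \<gamma>))) (\<eta> \<epsilon>)
                 + z0 * powr_oscillation (- (1 - 1 / (2 * \<gamma>) + 1)) (\<eta> \<epsilon>)) + C1 * \<epsilon> powr (1/3)" for \<epsilon>
  have \<eta>: "(\<eta> \<longlongrightarrow> 0) (at_right 0)"
    unfolding \<eta>_def using tendsto_mult_left_zero[OF tendsto_powr_at_right_0, of "2/3" z0] by simp
  have M: "(M \<longlongrightarrow> 0) (at_right 0)"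
    unfolding M_def
    using tendsto_add[OF tendsto_mult[OF tendsto_const tendsto_add[OF powr_oscillation_tendsto_0[OF \<eta>]
          tendsto_mult[OF tendsto_const powr_oscillation_tendsto_0[OF \<eta>]]]]
        tendsto_mult[OF tendsto_const tendsto_powr_at_right_0]]
    by simp
  have J: "((\<lambda>\<epsilon>. J \<epsilon> / \<epsilon> powr (2/3)) \<longlongrightarrow> 0) (at_right 0)"
    unfolding J_def by (rule smalloD_tendsto[OF R_small])
  have good: "\<forall>\<^sub>F \<epsilon> in at_right 0. 0 < \<epsilon> \<and> \<epsilon> \<le> 1 \<and> \<eta> \<epsilon> \<le> 1/2
      \<and> (\<lambda>s. R (tz \<beta> \<gamma> s \<epsilon>) \<epsilon>) absolutely_integrable_on {-z0..z0}"
  proof -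
    have "\<forall>\<^sub>F \<epsilon> in at_right 0. \<eta> \<epsilon> < 1/2" using \<eta> by (rule order_tendstoD(2)) simp
    moreover have "\<forall>\<^sub>F \<epsilon> in at_right (0::real). 0 < \<epsilon> \<and> \<epsilon> \<le> 1"
      unfolding eventually_at_right_field by (intro exI[of _ 1]) auto
    ultimately show ?thesis using R_ai by eventually_elim auto
  qed
  show ai: "\<forall>\<^sub>F \<epsilon> in at_right 0. (\<lambda>s. R_III2 \<beta> \<gamma> R s \<epsilon>) absolutely_integrable_on {-z0..z0}"
    using good by eventually_elim (use \<beta> \<gamma> in \<open>auto intro!: R_III2_absolutely_integrable simp: \<eta>_def\<close>)
  show "((\<lambda>\<epsilon>. integral {-z0..z0} (\<lambda>s. norm (R_III2 \<beta> \<gamma> R s \<epsilon>))) \<longlongrightarrow> 0) (at_right 0)"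
  proof (rule Lim_null_comparison)
    show "((\<lambda>\<epsilon>. 2 * z0 * M \<epsilon> + C2 * (J \<epsilon> / \<epsilon> powr (2/3))) \<longlongrightarrow> 0) (at_right 0)"
      using tendsto_add[OF tendsto_mult_right_zero[OF M] tendsto_mult_right_zero[OF J]] by simp
    show "\<forall>\<^sub>F \<epsilon> in at_right 0. norm (integral {-z0..z0} (\<lambda>s. norm (R_III2 \<beta> \<gamma> R s \<epsilon>)))
        \<le> 2 * z0 * M \<epsilon> + C2 * (J \<epsilon> / \<epsilon> powr (2/3))"
      using good ai
    proof eventually_elim
      case (elim \<epsilon>)
      have "norm (R_III2 \<beta> \<gamma> R s \<epsilon>) \<le> M \<epsilon> + C2 / \<epsilon> powr (2/3) * norm (R (tz \<beta> \<gamma> s \<epsilon>) \<epsilon>)"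
        if "s \<in> {-z0..z0}" for s
        using bound[OF _ _ _ that] elim by (simp add: M_def \<eta>_def)
      then have "integral {-z0..z0} (\<lambda>s. norm (R_III2 \<beta> \<gamma> R s \<epsilon>))
          \<le> (z0 - - z0) * M \<epsilon> + C2 / \<epsilon> powr (2/3) * J \<epsilon>"
        unfolding J_def using elim z0 by (intro integral_norm_le_affine_bound) auto
      moreover have "0 \<le> integral {-z0..z0} (\<lambda>s. norm (R_III2 \<beta> \<gamma> R s \<epsilon>))"
        using elim set_lebesgue_integral_eq_integral(1)[OF absolutely_integrable_norm]
        by (intro integral_nonneg) (force simp: o_def)+
      ultimately show ?case by simp
    qed
  qed
qed

theorem lemma9p1:
  fixes \<beta> \<gamma> z0 :: real and R :: "real \<Rightarrow> real \<Rightarrow> real^2^2"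
  assumes "\<beta> > 0" and "1/2 < \<gamma>" and "\<gamma> < 1" and "z0 > 0"
    and "\<forall>\<^sub>F \<epsilon> in at_right 0.
           (\<lambda>s. R (tz \<beta> \<gamma> s \<epsilon>) \<epsilon>) absolutely_integrable_on {-z0..z0}"
    and "(\<lambda>\<epsilon>. integral {-z0..z0} (\<lambda>s. norm (R (tz \<beta> \<gamma> s \<epsilon>) \<epsilon>)))
           \<in> o[at_right 0](\<lambda>\<epsilon>. \<epsilon> powr (2/3))"
  shows "\<exists>U :: real \<Rightarrow> real \<Rightarrow> real^2^2.
    (\<forall>\<^sub>F \<epsilon> in at_right 0.
       (\<lambda>s. (c0 \<beta> \<gamma> *\<^sub>R mat2 0 1 s 0 + R_III2 \<beta> \<gamma> R s \<epsilon>) ** U s \<epsilon>)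
          absolutely_integrable_on {-z0..z0} \<and>
       (\<forall>z\<in>{-z0..z0}. U z \<epsilon> = U (-z0) \<epsilon> +
          integral {-z0..z} (\<lambda>s. (c0 \<beta> \<gamma> *\<^sub>R mat2 0 1 s 0 + R_III2 \<beta> \<gamma> R s \<epsilon>) ** U s \<epsilon>)))
    \<and> (\<forall>z\<in>{-z0..z0}. ((\<lambda>\<epsilon>. U z \<epsilon>) \<longlongrightarrow> airy_limit (c0 \<beta> \<gamma>) z) (at_right 0))"
proof -
  note \<beta> = assms(1) and \<gamma> = assms(2) and z0 = assms(4)
  have c: "c0 \<beta> \<gamma> > 0" using \<beta> \<gamma> by (simp add: c0_pos)
  show ?thesis
  proof (rule volterra_perturbation_tendsto)
    show "- z0 \<le> z0" using z0 by simp
    show "continuous_on {-z0..z0} (\<lambda>s. c0 \<beta> \<gamma> *\<^sub>R mat2 0 1 s 0)" by (intro continuous_intros)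
    show "continuous_on {-z0..z0} (airy_limit (c0 \<beta> \<gamma>))" using c by (rule continuous_on_airy_limit)
    show "airy_limit (c0 \<beta> \<gamma>) z = airy_limit (c0 \<beta> \<gamma>) (- z0)
        + integral {- z0..z} (\<lambda>s. (c0 \<beta> \<gamma> *\<^sub>R mat2 0 1 s 0) ** airy_limit (c0 \<beta> \<gamma>) s)"
      if "z \<in> {-z0..z0}" for z
      using c that by (rule airy_limit_integral_equation)
    show "\<forall>\<^sub>F \<epsilon> in at_right 0. (\<lambda>s. R_III2 \<beta> \<gamma> R s \<epsilon>) absolutely_integrable_on {-z0..z0}"
      and "((\<lambda>\<epsilon>. integral {-z0..z0} (\<lambda>s. norm (R_III2 \<beta> \<gamma> R s \<epsilon>))) \<longlongrightarrow> 0) (at_right 0)"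
      using R_III2_L1_tendsto_0[OF \<beta> \<gamma> z0 assms(5,6)] by auto
  qed
qed

end
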